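(* Let $\mathcal{H}=\mathcal{H}_1\otimes\cdots\otimes\mathcal{H}_n$ be a tensor product of finite-dimensional complex Hilbert spaces, $\ket{\psi}\in\mathcal{H}$ a unit vector and $\rho=\ket{\psi}\bra{\psi}$. Then for every $k$ with $0\le k\le n$, $$\dim\big(H^k(\rho)\big)=\dim\big(H^{n-k}(\rho)\big),$$ where $H^k(\rho)=\ker(d^k)/\mathrm{im}(d^{k-1})$ is the $k$-th cohomology of the entanglement complex $0\to\mathbb{C}\xrightarrow{d^0}\Omega^1(\rho)\xrightarrow{d^1}\cdots\xrightarrow{d^{n-1}}\Omega^n(\rho)\xrightarrow{d^n}0$.
   Context: Notation. For $I\subseteq\{1,\dots,n\}$, $\mathcal{H}_I=\bigotimes_{i\in I}\mathcal{H}_i$ with factors in increasing order; $\rho_I=\mathrm{tr}_{I^C}(\rho)$ is the reduced density matrix (partial trace over the complementary factors), $s_I$ is the orthogonal projection onto $\mathrm{im}(\rho_I)$, and $\mathcal{O}|_{\rho_I}=s_I\mathcal{O}s_I$ for an operator $\mathcal{O}$ on $\mathcal{H}_I$. Entanglement forms. $\Omega^0(\rho)=\mathbb{C}$, and for $1\le k\le n$, $\Omega^k(\rho)=\prod_{|I|=k}\{s_I\mathcal{O}s_I:\mathcal{O}\in\mathrm{End}(\mathcal{H}_I)\}$ (tuples $\omega=(\omega_I)_{|I|=k}$ indexed by the $k$-element subsets). Signed tensor product. For $j\notin J$ and an operator $X$ on $\mathcal{H}_J$, $\mathbb{I}_j\,\widehat{\otimes}\,X$ denotes $(-1)^{p}$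 times the operator on $\mathcal{H}_{J\cup\{j\}}$ (factors in increasing order) acting as the identity on $\mathcal{H}_j$ and as $X$ on the remaining factors, where $p=\#\{i\in J: i<j\}$. Coboundary. $d^{-1}=0$; $d^0\lambda=(\lambda s_{\{1\}},\dots,\lambda s_{\{n\}})$ for $\lambda\in\mathbb{C}$; for $1\le m\le n-1$, $d^m:\Omega^m(\rho)\to\Omega^{m+1}(\rho)$ has components $(d^m\omega)_I=\big(m\sum_{j\in I}\mathbb{I}_j\,\widehat{\otimes}\,\omega_{I\setminus\{j\}}\big)\big|_{\rho_I}$ for $|I|=m+1$; $d^n=0$. These satisfy $d^m\circ d^{m-1}=0$. *)

theory Defs
  imports Complex_Main "HOL-Library.Function_Algebras"
begin

text \<open>The i-th Hilbert space is modelled as C^(d i) with its standard inner product.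
  A basis index of H_I is a function a :: nat => nat with a i < d i for i in I and
  a i = 0 outside I.  Operators on H_I are kernels (matrices) indexed by such
  multi-indices, zero outside.\<close>

type_synonym op = "(nat \<Rightarrow> nat) \<Rightarrow> (nat \<Rightarrow> nat) \<Rightarrow> complex"
type_synonym eform = "nat set \<Rightarrow> op"

definition idx :: "(nat \<Rightarrow> nat) \<Rightarrow> nat set \<Rightarrow> (nat \<Rightarrow> nat) set" where
  "idx d I = {a. (\<forall>i\<in>I. a i < d i) \<and> (\<forall>i. i \<notin> I \<longrightarrow> a i = 0)}"

definition op_mult :: "(nat \<Rightarrow> nat) \<Rightarrow> nat set \<Rightarrow> op \<Rightarrow> op \<Rightarrow> op" where
  "op_mult d I X Y = (\<lambda>a b. if a \<in> idx d I \<and> b \<in> idx d I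
      then (\<Sum>c\<in>idx d I. X a c * Y c b) else 0)"

definition op_apply :: "(nat \<Rightarrow> nat) \<Rightarrow> nat set \<Rightarrow> op \<Rightarrow> ((nat \<Rightarrow> nat) \<Rightarrow> complex)
    \<Rightarrow> ((nat \<Rightarrow> nat) \<Rightarrow> complex)" where
  "op_apply d I X v = (\<lambda>a. if a \<in> idx d I then (\<Sum>b\<in>idx d I. X a b * v b) else 0)"

definition op_range :: "(nat \<Rightarrow> nat) \<Rightarrow> nat set \<Rightarrow> op \<Rightarrow> ((nat \<Rightarrow> nat) \<Rightarrow> complex) set" where
  "op_range d I X = range (op_apply d I X)"

definition op_supported :: "(nat \<Rightarrow> nat) \<Rightarrow> nat set \<Rightarrow> op \<Rightarrow> bool" where
  "op_supported d I X = (\<forall>a b. a \<notin> idx d I \<or> b \<notin> idx d I \<longrightarrow> X a b = 0)"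

definition is_orth_proj :: "(nat \<Rightarrow> nat) \<Rightarrow> nat set \<Rightarrow> op \<Rightarrow> bool" where
  "is_orth_proj d I P = (op_supported d I P \<and> op_mult d I P P = P
      \<and> (\<forall>a b. P a b = cnj (P b a)))"

definition im_proj :: "(nat \<Rightarrow> nat) \<Rightarrow> nat set \<Rightarrow> op \<Rightarrow> op" where
  "im_proj d I X = (THE P. is_orth_proj d I P \<and> op_range d I P = op_range d I X)"

definition dens :: "nat \<Rightarrow> (nat \<Rightarrow> nat) \<Rightarrow> ((nat \<Rightarrow> nat) \<Rightarrow> complex) \<Rightarrow> op" where
  "dens n d \<psi> = (\<lambda>a b. if a \<in> idx d {1..n} \<and> b \<in> idx d {1..n}
      then \<psi> a * cnj (\<psi> b) else 0)"

definition rdm :: "nat \<Rightarrow> (nat \<Rightarrow> nat) \<Rightarrow> ((nat \<Rightarrow> nat) \<Rightarrow> complex) \<Rightarrow> nat set \<Rightarrow> op" where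
  "rdm n d \<psi> I = (\<lambda>a b. if a \<in> idx d I \<and> b \<in> idx d I
      then (\<Sum>c\<in>idx d ({1..n} - I). dens n d \<psi> (\<lambda>i. a i + c i) (\<lambda>i. b i + c i))
      else 0)"

definition supp :: "nat \<Rightarrow> (nat \<Rightarrow> nat) \<Rightarrow> ((nat \<Rightarrow> nat) \<Rightarrow> complex) \<Rightarrow> nat set \<Rightarrow> op" where
  "supp n d \<psi> I = im_proj d I (rdm n d \<psi> I)"

definition restr :: "nat \<Rightarrow> (nat \<Rightarrow> nat) \<Rightarrow> ((nat \<Rightarrow> nat) \<Rightarrow> complex) \<Rightarrow> nat set \<Rightarrow> op \<Rightarrow> op" where
  "restr n d \<psi> I X = op_mult d I (supp n d \<psi> I) (op_mult d I X (supp n d \<psi> I))"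

text \<open>Entanglement forms Omega^k(rho): tuples indexed by k-subsets of {1..n},
  the component at every other index set being 0.  Omega^0 = C is the set of
  forms living at I = {} (a 1x1 operator, i.e. a scalar).\<close>
definition eforms :: "nat \<Rightarrow> (nat \<Rightarrow> nat) \<Rightarrow> ((nat \<Rightarrow> nat) \<Rightarrow> complex) \<Rightarrow> nat \<Rightarrow> eform set" where
  "eforms n d \<psi> k = (if k = 0 then
      {\<omega>. (\<forall>I. I \<noteq> {} \<longrightarrow> \<omega> I = 0) \<and>
           (\<forall>a b. a \<noteq> (\<lambda>i. 0) \<or> b \<noteq> (\<lambda>i. 0) \<longrightarrow> \<omega> {} a b = 0)}
    else {\<omega>. \<forall>I. if I \<subseteq> {1..n} \<and> card I = k then (\<exists>X. \<omega> I = restr n d \<psi> I X)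
                 else \<omega> I = 0})"

definition stensor :: "(nat \<Rightarrow> nat) \<Rightarrow> nat \<Rightarrow> nat set \<Rightarrow> op \<Rightarrow> op" where
  "stensor d j J X = (\<lambda>a b. if a \<in> idx d (insert j J) \<and> b \<in> idx d (insert j J)
      then (-1) ^ card {i\<in>J. i < j} * (if a j = b j then X (a(j := 0)) (b(j := 0)) else 0)
      else 0)"

definition cobound :: "nat \<Rightarrow> (nat \<Rightarrow> nat) \<Rightarrow> ((nat \<Rightarrow> nat) \<Rightarrow> complex) \<Rightarrow> nat \<Rightarrow> eform \<Rightarrow> eform" where
  "cobound n d \<psi> m \<omega> = (if m = 0 then
       (\<lambda>I. if \<exists>j\<in>{1..n}. I = {j}
            then (\<lambda>a b. \<omega> {} (\<lambda>i. 0) (\<lambda>i. 0) * supp n d \<psi> I a b) else 0)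
     else if m < n then
       (\<lambda>I. if I \<subseteq> {1..n} \<and> card I = m + 1
            then restr n d \<psi> I (\<lambda>a b. of_nat m *
                   (\<Sum>j\<in>I. stensor d j (I - {j}) (\<omega> (I - {j})) a b))
            else 0)
     else 0)"

definition cscale :: "complex \<Rightarrow> eform \<Rightarrow> eform" where
  "cscale c \<omega> = (\<lambda>I a b. c * \<omega> I a b)"

definition cohom_dim :: "nat \<Rightarrow> (nat \<Rightarrow> nat) \<Rightarrow> ((nat \<Rightarrow> nat) \<Rightarrow> complex) \<Rightarrow> nat \<Rightarrow> nat" where
  "cohom_dim n d \<psi> k =
     vector_space.dim cscale {\<omega> \<in> eforms n d \<psi> k. cobound n d \<psi> k \<omega> = 0}
     - (if k = 0 then 0
        else vector_space.dim cscale (cobound n d \<psi> (k - 1) ` eforms n d \<psi> (k - 1)))"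

end

theory Submission
  imports Defs "HOL-Library.FuncSet"
begin

(* For |I| = k, the expectation value <psi| A (x) B |psi> of an operator A on H_I and an operator
   B on the complementary factors pairs Omega^k(rho) with Omega^(n-k)(rho).  Because psi is pure,
   rho_I is the sum of the projectors onto the "slices" of psi with the complementary coordinates
   fixed, so s_I fixes these slices: restricting A or B to the support does not change the
   pairing, and a restricted operator whose expectation values against all B vanish is zero.
   Hence the pairing is nondegenerate, and with the signs (-1)^(sum I) the coboundary d^k is,
   up to the nonzero factors k and n - k - 1, the negative adjoint of d^(n-k-1).  So
   dim Omega^k = dim Omega^(n-k) and rank d^k = rank d^(n-k-1), and rank-nullity turns these
   two symmetries into dim H^k = dim H^(n-k). *)

text \<open>Keeps \<open>{1..n}\<close> from being rewritten to \<open>{Suc 0..n}\<close>, which would block the lemmas about it.\<close>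
declare One_nat_def [simp del]

section \<open>Linear algebra\<close>

context vector_space
begin

lemma obtain_finite_basis:
  assumes "finite G" "W \<subseteq> span G"
  obtains B where "finite B" "B \<subseteq> W" "independent B" "W \<subseteq> span B" "card B = dim W"
proof -
  obtain B where B: "B \<subseteq> W" "independent B" "W \<subseteq> span B" "card B = dim W"
    by (rule basis_exists)
  have "finite B" using independent_span_bound[OF assms(1) B(2)] B(1) assms(2) by blast
  then show ?thesis using B that by blast
qed

lemma span_insert_kernel:
  assumes X: "subspace X" and add: "\<And>x y. \<phi> (x + y) = \<phi> x + \<phi> y"
    and sc: "\<And>c x. \<phi> (scale c x) = c * \<phi> x"
    and x0: "x0 \<in> X" "\<phi> x0 \<noteq> 0" and ker: "{x\<in>X. \<phi> x = 0} \<subseteq> span B"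
  shows "X \<subseteq> span (insert x0 B)"
proof
  fix x assume x: "x \<in> X"
  define t where "t = \<phi> x / \<phi> x0"
  have "x + scale (- t) x0 \<in> X"
    by (intro subspace_add[OF X x] subspace_scale[OF X x0(1)])
  moreover have "\<phi> (x + scale (- t) x0) = \<phi> x + (- t) * \<phi> x0"
    by (simp only: add sc)
  then have "\<phi> (x + scale (- t) x0) = 0"
    using x0(2) by (simp add: t_def)
  ultimately have "x + scale (- t) x0 \<in> span (insert x0 B)"
    using ker span_mono[of B "insert x0 B"] by blast
  then have "(x + scale (- t) x0) + scale t x0 \<in> span (insert x0 B)"
    by (rule span_add[OF _ span_scale[OF span_base]]) simp
  then show "x \<in> span (insert x0 B)" by (simp add: scale_minus_left)
qed

lemma span_bound_of_separating:
  fixes \<phi> :: "'e \<Rightarrow> 'b \<Rightarrow> 'a"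
  assumes "finite E" "subspace X"
    and "\<And>e x y. e \<in> E \<Longrightarrow> \<phi> e (x + y) = \<phi> e x + \<phi> e y"
    and "\<And>e c x. e \<in> E \<Longrightarrow> \<phi> e (scale c x) = c * \<phi> e x"
    and "\<And>x. x \<in> X \<Longrightarrow> \<forall>e\<in>E. \<phi> e x = 0 \<Longrightarrow> x = 0"
  shows "\<exists>B. finite B \<and> card B \<le> card E \<and> X \<subseteq> span B"
  using assms
proof (induction E arbitrary: X rule: finite_induct)
  case empty
  then have "X \<subseteq> span {}" by (auto simp: span_empty)
  then show ?case by (intro exI[of _ "{}"]) auto
next
  case (insert e E)
  let ?X' = "{x\<in>X. \<phi> e x = 0}"
  have add: "\<phi> e (x + y) = \<phi> e x + \<phi> e y" and sc: "\<phi> e (scale c x) = c * \<phi> e x" for x y c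
    using insert.prems by auto
  have "\<phi> e 0 = 0" using sc[of 0 0] by simp
  then have "subspace ?X'"
    using insert.prems(1) by (auto simp: subspace_def add sc)
  then obtain B where B: "finite B" "card B \<le> card E" "?X' \<subseteq> span B"
    using insert.IH[of ?X'] insert.prems by auto
  show ?case
  proof (cases "\<exists>x0\<in>X. \<phi> e x0 \<noteq> 0")
    case True
    then obtain x0 where "x0 \<in> X" "\<phi> e x0 \<noteq> 0" by blast
    then have "X \<subseteq> span (insert x0 B)"
      using span_insert_kernel[OF insert.prems(1) add sc _ _ B(3)] by blast
    then show ?thesis
      using B insert.hyps by (intro exI[of _ "insert x0 B"]) (auto simp: card_insert_if)
  next
    case False
    then have "X \<subseteq> span B" using B(3) by auto
    then show ?thesis using B insert.hyps by (intro exI[of _ B]) auto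
  qed
qed

lemma dim_le_card_of_separating:
  fixes \<phi> :: "'e \<Rightarrow> 'b \<Rightarrow> 'a"
  assumes "finite E" "subspace X"
    and "\<And>e x y. e \<in> E \<Longrightarrow> \<phi> e (x + y) = \<phi> e x + \<phi> e y"
    and "\<And>e c x. e \<in> E \<Longrightarrow> \<phi> e (scale c x) = c * \<phi> e x"
    and "\<And>x. x \<in> X \<Longrightarrow> \<forall>e\<in>E. \<phi> e x = 0 \<Longrightarrow> x = 0"
  shows "dim X \<le> card E"
proof -
  obtain B where "finite B" "card B \<le> card E" "X \<subseteq> span B"
    using span_bound_of_separating[of E X \<phi>, OF assms] by blast
  then show ?thesis using dim_le_card[of X B] by linarith
qed

lemma dim_le_dim_kernel_add_dim_image:
  assumes f: "Vector_Spaces.linear scale scale f" and V: "subspace V" and G: "finite G" "V \<subseteq> span G"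
  shows "dim V \<le> dim {x\<in>V. f x = 0} + dim (f ` V)"
proof -
  interpret f: Vector_Spaces.linear scale scale f by fact
  let ?K = "{x\<in>V. f x = 0}"
  have "?K \<subseteq> span G" using G(2) by blast
  then obtain BK where BK: "finite BK" "BK \<subseteq> ?K" "independent BK" "?K \<subseteq> span BK" "card BK = dim ?K"
    by (rule obtain_finite_basis[OF G(1)])
  obtain C where C: "finite C" "C \<subseteq> f ` V" "independent C" "f ` V \<subseteq> span C" "card C = dim (f ` V)"
    by (rule obtain_finite_basis[OF finite_imageI[OF G(1)] f.spans_image[OF G(2)]])
  have "\<forall>y\<in>C. \<exists>x\<in>V. f x = y" using C(2) by blast
  then obtain g where g: "\<And>y. y \<in> C \<Longrightarrow> g y \<in> V \<and> f (g y) = y" by metis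
  have span_gC: "span (g ` C) \<subseteq> V" using g by (intro span_minimal V) auto
  have "f ` g ` C = C" using g by force
  then have f_span: "f ` span (g ` C) = span C" by (metis f.span_image)
  have "V \<subseteq> span (BK \<union> g ` C)"
  proof
    fix x assume x: "x \<in> V"
    then have "f x \<in> f ` span (g ` C)" using C(4) f_span by blast
    then obtain z where z: "z \<in> span (g ` C)" "f z = f x" by auto
    then have "x - z \<in> ?K" using x span_gC V by (auto simp: subspace_diff f.diff)
    then have "(x - z) + z \<in> span (BK \<union> g ` C)"
      using BK(4) z(1) span_mono[of BK "BK \<union> g ` C"] span_mono[of "g ` C" "BK \<union> g ` C"]
      by (intro span_add) auto
    then show "x \<in> span (BK \<union> g ` C)" by simp
  qed
  then have "dim V \<le> card (BK \<union> g ` C)" using BK C by (intro dim_le_card) auto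
  also have "\<dots> \<le> card BK + card C"
    using card_Un_le[of BK "g ` C"] card_image_le[OF C(1), of g] by linarith
  finally show ?thesis using BK C by simp
qed

lemma dim_kernel_add_dim_image_le:
  assumes f: "Vector_Spaces.linear scale scale f" and V: "subspace V" and G: "finite G" "V \<subseteq> span G"
  shows "dim {x\<in>V. f x = 0} + dim (f ` V) \<le> dim V"
proof -
  interpret f: Vector_Spaces.linear scale scale f by fact
  let ?K = "{x\<in>V. f x = 0}"
  have "?K \<subseteq> span G" using G(2) by blast
  then obtain BK where BK: "finite BK" "BK \<subseteq> ?K" "independent BK" "?K \<subseteq> span BK" "card BK = dim ?K"
    by (rule obtain_finite_basis[OF G(1)])
  obtain B where B: "BK \<subseteq> B" "B \<subseteq> V" "independent B" "V \<subseteq> span B"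
    using maximal_independent_subset_extend[of BK V] BK by auto
  have finB: "finite B" using independent_span_bound[OF G(1) B(3)] B(2) G(2) by blast
  have "f ` B \<subseteq> insert 0 (f ` (B - BK))" using BK by auto
  then have "span (f ` B) \<subseteq> span (f ` (B - BK))" by (metis span_insert_0 span_mono)
  then have "f ` V \<subseteq> span (f ` (B - BK))" using f.spans_image[OF B(4)] by blast
  then have "dim (f ` V) \<le> card (f ` (B - BK))" using finB by (intro dim_le_card) auto
  also have "\<dots> \<le> card (B - BK)" using finB by (intro card_image_le) auto
  finally have "dim (f ` V) \<le> card (B - BK)" .
  moreover have "card (B - BK) = dim V - dim ?K"
    using basis_card_eq_dim[OF B(2) B(4) B(3)] BK B(1) finB by (simp add: card_Diff_subset)
  moreover have "dim ?K \<le> dim V"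
    using basis_card_eq_dim[OF B(2) B(4) B(3)] card_mono[OF finB B(1)] BK(5) by simp
  ultimately show ?thesis by linarith
qed

lemma rank_nullity:
  assumes "Vector_Spaces.linear scale scale f" "subspace V" "finite G" "V \<subseteq> span G"
  shows "dim {x\<in>V. f x = 0} + dim (f ` V) = dim V"
  using dim_le_dim_kernel_add_dim_image[OF assms] dim_kernel_add_dim_image_le[OF assms] by simp

end

lemma sum_swap_pairs:
  "(\<Sum>a\<in>A. \<Sum>b\<in>B. \<Sum>c\<in>C. \<Sum>e\<in>E. f a b c e) = (\<Sum>c\<in>C. \<Sum>e\<in>E. \<Sum>a\<in>A. \<Sum>b\<in>B. f a b c e)"
proof -
  have "(\<Sum>a\<in>A. \<Sum>b\<in>B. \<Sum>c\<in>C. \<Sum>e\<in>E. f a b c e) = (\<Sum>a\<in>A. \<Sum>c\<in>C. \<Sum>b\<in>B. \<Sum>e\<in>E. f a b c e)"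
    by (rule sum.cong[OF refl], rule sum.swap)
  also have "\<dots> = (\<Sum>c\<in>C. \<Sum>a\<in>A. \<Sum>e\<in>E. \<Sum>b\<in>B. f a b c e)"
    by (subst sum.swap) (rule sum.cong[OF refl], rule sum.cong[OF refl], rule sum.swap)
  also have "\<dots> = (\<Sum>c\<in>C. \<Sum>e\<in>E. \<Sum>a\<in>A. \<Sum>b\<in>B. f a b c e)"
    by (rule sum.cong[OF refl], rule sum.swap)
  finally show ?thesis .
qed

lemma sum_subsets_Suc_remove:
  assumes M: "finite M"
  shows "(\<Sum>I\<in>{I. I \<subseteq> M \<and> card I = Suc k}. \<Sum>j\<in>I. F (I - {j}) j)
       = (\<Sum>J\<in>{J. J \<subseteq> M \<and> card J = k}. \<Sum>j\<in>M - J. F J j)"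
proof -
  let ?A = "{I. I \<subseteq> M \<and> card I = Suc k}" and ?B = "{J. J \<subseteq> M \<and> card J = k}"
  have fin: "finite ?A" "finite ?B" using M by (auto intro: finite_subset[of _ "Pow M"])
  have fin_sub: "I \<subseteq> M \<Longrightarrow> finite I" for I using M finite_subset by blast
  have bij: "bij_betw (\<lambda>(I, j). (I - {j}, j)) (Sigma ?A (\<lambda>I. I)) (Sigma ?B (\<lambda>J. M - J))"
    by (rule bij_betw_byWitness[where f' = "\<lambda>(J, j). (insert j J, j)"]) (use fin_sub in auto)
  have "(\<Sum>I\<in>?A. \<Sum>j\<in>I. F (I - {j}) j) = (\<Sum>p\<in>Sigma ?A (\<lambda>I. I). case_prod F ((\<lambda>(I, j). (I - {j}, j)) p))"
    using fin fin_sub by (subst sum.Sigma) (auto simp: split_def)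
  also have "\<dots> = (\<Sum>q\<in>Sigma ?B (\<lambda>J. M - J). case_prod F q)"
    by (rule sum.reindex_bij_betw[OF bij])
  also have "\<dots> = (\<Sum>J\<in>?B. \<Sum>j\<in>M - J. F J j)"
    using fin M by (subst sum.Sigma) (auto simp: split_def)
  finally show ?thesis .
qed

lemma sum_apply_fun: "(sum f A) x = (\<Sum>a\<in>A. f a x)"
  by (induction A rule: infinite_finite_induct) auto


lemma finite_idx: assumes "finite I" shows "finite (idx d I)"
proof -
  have "idx d I \<subseteq> (\<lambda>f i. if i \<in> I then f i else 0) ` (PiE I (\<lambda>i. {..<d i}))"
  proof
    fix a assume a: "a \<in> idx d I"
    have "a = (\<lambda>i. if i \<in> I then restrict a I i else 0)"
      using a by (auto simp: idx_def fun_eq_iff restrict_def)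
    moreover have "restrict a I \<in> PiE I (\<lambda>i. {..<d i})" using a by (auto simp: idx_def)
    ultimately show "a \<in> (\<lambda>f i. if i \<in> I then f i else 0) ` (PiE I (\<lambda>i. {..<d i}))" by blast
  qed
  moreover have "finite (PiE I (\<lambda>i. {..<d i}))" using assms by (intro finite_PiE) auto
  ultimately show ?thesis using finite_subset by blast
qed

lemma finite_idx_subset: "I \<subseteq> {1..n} \<Longrightarrow> finite (idx d I)"
  by (meson finite_atLeastAtMost finite_idx finite_subset)

lemma idx_empty: "idx d {} = {\<lambda>i. 0}"
  by (auto simp: idx_def)

definition mask :: "nat set \<Rightarrow> (nat \<Rightarrow> nat) \<Rightarrow> nat \<Rightarrow> nat" where
  "mask I x = (\<lambda>i. if i \<in> I then x i else 0)"

lemma add_in_idx: "a \<in> idx d I \<Longrightarrow> c \<in> idx d K \<Longrightarrow> I \<inter> K = {} \<Longrightarrow> a + c \<in> idx d (I \<union> K)"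
  by (auto simp: idx_def disjoint_iff)

lemma mask_add_left: "a \<in> idx d I \<Longrightarrow> c \<in> idx d K \<Longrightarrow> I \<inter> K = {} \<Longrightarrow> mask I (a + c) = a"
  by (auto simp: idx_def mask_def fun_eq_iff disjoint_iff)

lemma mask_add_right: "a \<in> idx d I \<Longrightarrow> c \<in> idx d K \<Longrightarrow> I \<inter> K = {} \<Longrightarrow> mask K (a + c) = c"
  by (auto simp: idx_def mask_def fun_eq_iff disjoint_iff)

lemma mask_in_idx: "x \<in> idx d J \<Longrightarrow> I \<subseteq> J \<Longrightarrow> mask I x \<in> idx d I"
  by (auto simp: idx_def mask_def)

lemma mask_add_mask: "x \<in> idx d (I \<union> K) \<Longrightarrow> I \<inter> K = {} \<Longrightarrow> mask I x + mask K x = x"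
  by (auto simp: idx_def mask_def fun_eq_iff)

lemma sum_idx_Un:
  assumes "I \<inter> K = {}" "finite I" "finite K"
  shows "(\<Sum>x\<in>idx d (I \<union> K). f x) = (\<Sum>a\<in>idx d I. \<Sum>c\<in>idx d K. f (a + c))"
proof -
  have bij: "bij_betw (\<lambda>(a, c). a + c) (idx d I \<times> idx d K) (idx d (I \<union> K))"
    by (rule bij_betw_byWitness[where f' = "\<lambda>x. (mask I x, mask K x)"])
      (use assms in \<open>auto simp: mask_add_left mask_add_right mask_add_mask
        intro: add_in_idx mask_in_idx\<close>)
  have "(\<Sum>x\<in>idx d (I \<union> K). f x) = (\<Sum>p\<in>idx d I \<times> idx d K. f ((\<lambda>(a, c). a + c) p))"
    using sum.reindex_bij_betw[OF bij, of f] by simp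
  also have "\<dots> = (\<Sum>a\<in>idx d I. \<Sum>c\<in>idx d K. f (a + c))"
    by (simp add: sum.cartesian_product split_def)
  finally show ?thesis .
qed

definition op_adj :: "op \<Rightarrow> op" where "op_adj X = (\<lambda>a b. cnj (X b a))"

definition vec_inner :: "(nat \<Rightarrow> nat) \<Rightarrow> nat set \<Rightarrow> ((nat \<Rightarrow> nat) \<Rightarrow> complex)
    \<Rightarrow> ((nat \<Rightarrow> nat) \<Rightarrow> complex) \<Rightarrow> complex" where
  "vec_inner d I v w = (\<Sum>a\<in>idx d I. cnj (v a) * w a)"

lemma op_mult_assoc: "op_mult d I (op_mult d I X Y) Z = op_mult d I X (op_mult d I Y Z)"
proof (intro ext)
  fix a b
  show "op_mult d I (op_mult d I X Y) Z a b = op_mult d I X (op_mult d I Y Z) a b"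
  proof (cases "a \<in> idx d I \<and> b \<in> idx d I")
    case True
    then have "(\<Sum>c\<in>idx d I. (\<Sum>e\<in>idx d I. X a e * Y e c) * Z c b) =
      (\<Sum>c\<in>idx d I. X a c * (\<Sum>e\<in>idx d I. Y c e * Z e b))"
      by (simp add: sum_distrib_left sum_distrib_right mult.assoc) (rule sum.swap)
    then show ?thesis using True unfolding op_mult_def by (simp cong: sum.cong)
  qed (auto simp: op_mult_def)
qed

lemma op_mult_outside: "a \<notin> idx d I \<or> b \<notin> idx d I \<Longrightarrow> op_mult d I X Y a b = 0"
  by (auto simp: op_mult_def)

lemma op_apply_outside: "a \<notin> idx d I \<Longrightarrow> op_apply d I X v a = 0"
  by (simp add: op_apply_def)

lemma op_adj_mult: "op_adj (op_mult d I X Y) = op_mult d I (op_adj Y) (op_adj X)"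
  by (intro ext) (simp add: op_adj_def op_mult_def mult.commute)

lemma op_mult_add_left: "op_mult d I (X + Y) Z = op_mult d I X Z + op_mult d I Y Z"
  by (intro ext) (simp add: op_mult_def distrib_right sum.distrib)

lemma op_mult_add_right: "op_mult d I X (Y + Z) = op_mult d I X Y + op_mult d I X Z"
  by (intro ext) (simp add: op_mult_def distrib_left sum.distrib)

lemma op_mult_scale_left: "op_mult d I (\<lambda>a b. c * X a b) Y = (\<lambda>a b. c * op_mult d I X Y a b)"
  by (intro ext) (simp add: op_mult_def sum_distrib_left mult.assoc)

lemma op_mult_scale_right: "op_mult d I X (\<lambda>a b. c * Y a b) = (\<lambda>a b. c * op_mult d I X Y a b)"
  by (intro ext) (simp add: op_mult_def sum_distrib_left mult.left_commute[of c])

lemma op_mult_zero_left [simp]: "op_mult d I 0 Y = 0"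
  by (intro ext) (simp add: op_mult_def)

lemma op_mult_zero_right [simp]: "op_mult d I X 0 = 0"
  by (intro ext) (simp add: op_mult_def)

lemma op_apply_mult: "op_apply d I (op_mult d I X Y) v = op_apply d I X (op_apply d I Y v)"
proof (intro ext)
  fix a show "op_apply d I (op_mult d I X Y) v a = op_apply d I X (op_apply d I Y v) a"
  proof (cases "a \<in> idx d I")
    case True
    then have "(\<Sum>b\<in>idx d I. (\<Sum>c\<in>idx d I. X a c * Y c b) * v b) =
      (\<Sum>b\<in>idx d I. X a b * (\<Sum>c\<in>idx d I. Y b c * v c))"
      by (simp add: sum_distrib_left sum_distrib_right mult.assoc) (rule sum.swap)
    then show ?thesis using True unfolding op_apply_def op_mult_def by (simp cong: sum.cong)
  qed (simp add: op_apply_def)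
qed

lemma op_apply_add: "op_apply d I (X + Y) v = (\<lambda>a. op_apply d I X v a + op_apply d I Y v a)"
  by (intro ext) (simp add: op_apply_def distrib_right sum.distrib)

lemma op_apply_diff: "op_apply d I X (\<lambda>a. u a - v a) = (\<lambda>a. op_apply d I X u a - op_apply d I X v a)"
  by (intro ext) (simp add: op_apply_def right_diff_distrib sum_subtractf)

lemma op_apply_unit:
  assumes "finite I" "b \<in> idx d I"
  shows "op_apply d I X (\<lambda>x. if x = b then 1 else 0) = (\<lambda>a. if a \<in> idx d I then X a b else 0)"
  using assms finite_idx[OF assms(1)] by (auto simp: op_apply_def if_distrib cong: if_cong)

lemma vec_inner_self_eq_0:
  assumes "finite I" "vec_inner d I w w = 0" "a \<in> idx d I"
  shows "w a = 0"
proof -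
  have "complex_of_real (\<Sum>e\<in>idx d I. (cmod (w e))\<^sup>2) = vec_inner d I w w"
    unfolding vec_inner_def of_real_sum
    by (rule sum.cong) (simp_all add: complex_norm_square mult.commute del: of_real_power)
  then have "(\<Sum>e\<in>idx d I. (cmod (w e))\<^sup>2) = 0" using assms(2) of_real_eq_0_iff by metis
  then show ?thesis using assms(1,3) finite_idx by (simp add: sum_nonneg_eq_0_iff)
qed

section \<open>Orthogonal projections\<close>

lemma orth_proj_herm: "is_orth_proj d I P \<Longrightarrow> P a b = cnj (P b a)"
  unfolding is_orth_proj_def by blast

lemma orth_proj_adj: assumes "is_orth_proj d I P" shows "op_adj P = P"
  unfolding op_adj_def by (intro ext) (subst orth_proj_herm[OF assms], simp)

lemma orth_proj_idem: "is_orth_proj d I P \<Longrightarrow> op_mult d I P P = P"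
  unfolding is_orth_proj_def by blast

lemma orth_proj_supported: "is_orth_proj d I P \<Longrightarrow> op_supported d I P"
  unfolding is_orth_proj_def by blast

lemma vec_inner_orth_proj:
  assumes "is_orth_proj d I P"
  shows "vec_inner d I v (op_apply d I P w) = vec_inner d I (op_apply d I P v) w"
proof -
  have "vec_inner d I v (op_apply d I P w) = (\<Sum>a\<in>idx d I. \<Sum>b\<in>idx d I. cnj (v a) * P a b * w b)"
    by (simp add: vec_inner_def op_apply_def sum_distrib_left mult.assoc)
  also have "\<dots> = (\<Sum>b\<in>idx d I. (\<Sum>a\<in>idx d I. cnj (v a) * P a b) * w b)"
    by (subst sum.swap) (simp add: sum_distrib_right)
  also have "\<dots> = (\<Sum>b\<in>idx d I. cnj (\<Sum>a\<in>idx d I. P b a * v a) * w b)"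
  proof (intro sum.cong refl arg_cong2[where f = "(*)"])
    fix b show "(\<Sum>a\<in>idx d I. cnj (v a) * P a b) = cnj (\<Sum>a\<in>idx d I. P b a * v a)"
      unfolding cnj_sum by (intro sum.cong refl) (subst orth_proj_herm[OF assms], simp)
  qed
  also have "\<dots> = vec_inner d I (op_apply d I P v) w"
    by (simp add: vec_inner_def op_apply_def)
  finally show ?thesis .
qed

lemma cnj_vec_inner: "cnj (vec_inner d I v w) = vec_inner d I w v"
  by (simp add: vec_inner_def mult.commute)

lemma is_orth_proj_zero: "is_orth_proj d I 0"
  by (simp add: is_orth_proj_def op_supported_def)

lemma is_orth_proj_add:
  assumes P: "is_orth_proj d I P" and Q: "is_orth_proj d I Q"
    and PQ: "op_mult d I P Q = 0" and QP: "op_mult d I Q P = 0"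
  shows "is_orth_proj d I (P + Q)"
  unfolding is_orth_proj_def
proof (intro conjI allI)
  show "op_supported d I (P + Q)"
    using orth_proj_supported[OF P] orth_proj_supported[OF Q] by (simp add: op_supported_def)
  show "op_mult d I (P + Q) (P + Q) = P + Q"
    using orth_proj_idem[OF P] orth_proj_idem[OF Q] PQ QP
    by (simp add: op_mult_add_left op_mult_add_right)
  fix a b
  show "(P + Q) a b = cnj ((P + Q) b a)"
    using orth_proj_herm[OF P, of a b] orth_proj_herm[OF Q, of a b] by simp
qed

lemma op_apply_residual:
  assumes "is_orth_proj d I P"
  shows "op_apply d I P (\<lambda>a. u a - op_apply d I P u a) = (\<lambda>a. 0)"
  by (simp add: op_apply_diff op_apply_mult[symmetric] orth_proj_idem[OF assms])

definition proj_onto :: "(nat \<Rightarrow> nat) \<Rightarrow> nat set \<Rightarrow> ((nat \<Rightarrow> nat) \<Rightarrow> complex) \<Rightarrow> op" where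
  "proj_onto d I w = (\<lambda>a c. w a * cnj (w c) / vec_inner d I w w)"

lemma op_apply_proj_onto:
  "op_apply d I (proj_onto d I w) v =
     (\<lambda>a. if a \<in> idx d I then vec_inner d I w v / vec_inner d I w w * w a else 0)"
  by (intro ext) (simp add: op_apply_def proj_onto_def vec_inner_def sum_distrib_left
      sum_divide_distrib mult_ac)

lemma is_orth_proj_proj_onto:
  assumes w: "\<And>a. a \<notin> idx d I \<Longrightarrow> w a = 0" and nz: "vec_inner d I w w \<noteq> 0"
  shows "is_orth_proj d I (proj_onto d I w)"
  unfolding is_orth_proj_def
proof (intro conjI allI)
  let ?Q = "proj_onto d I w" and ?nrm = "vec_inner d I w w"
  show "op_supported d I ?Q" using w by (auto simp: op_supported_def proj_onto_def)
  show "op_mult d I ?Q ?Q = ?Q"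
  proof (intro ext)
    fix a c
    show "op_mult d I ?Q ?Q a c = ?Q a c"
    proof (cases "a \<in> idx d I \<and> c \<in> idx d I")
      case True
      have "op_mult d I ?Q ?Q a c = w a * cnj (w c) / ?nrm / ?nrm * ?nrm"
        using True by (simp add: op_mult_def proj_onto_def vec_inner_def sum_distrib_left
            sum_distrib_right sum_divide_distrib mult_ac)
      then show ?thesis using nz by (simp add: proj_onto_def)
    qed (use w in \<open>auto simp: op_mult_def proj_onto_def\<close>)
  qed
  fix a c
  have "cnj ?nrm = ?nrm" by (simp add: cnj_vec_inner)
  then show "?Q a c = cnj (?Q c a)" by (simp add: proj_onto_def mult.commute)
qed

lemma op_mult_proj_onto_eq_0:
  assumes P: "is_orth_proj d I P" and w: "\<And>a. a \<notin> idx d I \<Longrightarrow> w a = 0"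
    and Pw: "op_apply d I P w = (\<lambda>a. 0)"
  shows "op_mult d I P (proj_onto d I w) = 0" and "op_mult d I (proj_onto d I w) P = 0"
proof (intro ext)
  fix a c
  have "op_mult d I P (proj_onto d I w) a c = op_apply d I P w a * cnj (w c) / vec_inner d I w w"
    using w[of c] by (cases "c \<in> idx d I") (simp_all add: op_mult_def op_apply_def proj_onto_def
        sum_distrib_right sum_divide_distrib mult.assoc)
  then show "op_mult d I P (proj_onto d I w) a c = 0 a c" using Pw by simp
next
  show "op_mult d I (proj_onto d I w) P = 0"
  proof (intro ext)
    fix a c
    show "op_mult d I (proj_onto d I w) P a c = 0 a c"
    proof (cases "a \<in> idx d I \<and> c \<in> idx d I")
      case True
      have "(\<Sum>e\<in>idx d I. cnj (w e) * P e c) = cnj (op_apply d I P w c)"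
        using True by (simp add: op_apply_def cnj_sum orth_proj_herm[OF P, of _ c] mult.commute)
      moreover have "op_mult d I (proj_onto d I w) P a c = w a / vec_inner d I w w * (\<Sum>e\<in>idx d I. cnj (w e) * P e c)"
        using True by (simp add: op_mult_def proj_onto_def sum_distrib_left mult.assoc)
      ultimately show ?thesis using Pw by simp
    qed (auto simp: op_mult_def)
  qed
qed

lemma proj_onto_factor:
  assumes "w = op_apply d I A g"
  shows "proj_onto d I w = op_mult d I A (\<lambda>e c. g e * cnj (w c) / vec_inner d I w w)"
proof (intro ext)
  fix a c
  show "proj_onto d I w a c = op_mult d I A (\<lambda>e c. g e * cnj (w c) / vec_inner d I w w) a c"
    using assms op_apply_outside[of _ d I A g]
    by (auto simp: proj_onto_def op_mult_def op_apply_def sum_distrib_right sum_divide_distrib mult.assoc)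
qed

lemma add_proj_onto_residual_fixes:
  assumes P: "is_orth_proj d I P" and u: "\<And>a. a \<notin> idx d I \<Longrightarrow> u a = 0"
    and fixed: "\<forall>v\<in>F. op_apply d I P v = v"
  defines "w \<equiv> \<lambda>a. u a - op_apply d I P u a"
  assumes nz: "vec_inner d I w w \<noteq> 0"
  shows "\<forall>v\<in>insert u F. op_apply d I (P + proj_onto d I w) v = v"
proof -
  have Pw: "op_apply d I P w = (\<lambda>a. 0)" unfolding w_def by (rule op_apply_residual[OF P])
  have w_perp: "vec_inner d I w v = 0" if "v \<in> F" for v
    using that fixed vec_inner_orth_proj[OF P, of w v] Pw by (simp add: vec_inner_def)
  have u_split: "u = (\<lambda>a. w a + op_apply d I P u a)" by (simp add: w_def)
  have w_u: "vec_inner d I w u = vec_inner d I w w"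
    using vec_inner_orth_proj[OF P, of w u] Pw
    by (subst u_split) (simp add: vec_inner_def distrib_left sum.distrib)
  have "op_apply d I P u a + w a = u a" for a by (simp add: w_def)
  then have "op_apply d I (P + proj_onto d I w) u = u"
    using nz w_u u op_apply_outside[of _ d I P u] by (auto simp: op_apply_add op_apply_proj_onto fun_eq_iff)
  then show ?thesis
    using fixed w_perp by (auto simp: op_apply_add op_apply_proj_onto)
qed

lemma orth_proj_extend:
  assumes I: "finite I" and P: "is_orth_proj d I P" and PN: "P = op_mult d I A N"
    and u: "u \<in> op_range d I A" and fixed: "\<forall>v\<in>F. op_apply d I P v = v"
  shows "\<exists>P' N'. is_orth_proj d I P' \<and> P' = op_mult d I A N' \<and> (\<forall>v\<in>insert u F. op_apply d I P' v = v)"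
proof -
  obtain e where e: "u = op_apply d I A e" using u by (auto simp: op_range_def)
  define w where "w = (\<lambda>a. u a - op_apply d I P u a)"
  have w_range: "w = op_apply d I A (\<lambda>x. e x - op_apply d I N u x)"
    by (simp add: w_def op_apply_diff e PN op_apply_mult)
  then have w_supp: "w a = 0" if "a \<notin> idx d I" for a using that by (simp add: op_apply_outside)
  show ?thesis
  proof (cases "vec_inner d I w w = 0")
    case True
    then have "w = (\<lambda>a. 0)" using vec_inner_self_eq_0[OF I] w_supp by blast
    then have "op_apply d I P u = u" by (simp add: w_def fun_eq_iff)
    then show ?thesis using P PN fixed by blast
  next
    case False
    have Pw: "op_apply d I P w = (\<lambda>a. 0)" unfolding w_def by (rule op_apply_residual[OF P])
    have "is_orth_proj d I (P + proj_onto d I w)"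
      using is_orth_proj_add[OF P is_orth_proj_proj_onto[OF w_supp False]]
        op_mult_proj_onto_eq_0[OF P w_supp Pw] by blast
    moreover have "P + proj_onto d I w =
        op_mult d I A (N + (\<lambda>x c. (e x - op_apply d I N u x) * cnj (w c) / vec_inner d I w w))"
      unfolding PN proj_onto_factor[OF w_range] op_mult_add_right ..
    moreover have "\<forall>v\<in>insert u F. op_apply d I (P + proj_onto d I w) v = v"
      using add_proj_onto_residual_fixes[OF P _ fixed] False e op_apply_outside
      unfolding w_def by blast
    ultimately show ?thesis by blast
  qed
qed

lemma exists_orth_proj_fixing:
  assumes "finite I" "finite U" "U \<subseteq> op_range d I A"
  shows "\<exists>P N. is_orth_proj d I P \<and> P = op_mult d I A N \<and> (\<forall>v\<in>U. op_apply d I P v = v)"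
  using assms(2,3)
proof (induction U rule: finite_induct)
  case empty
  have "is_orth_proj d I 0" "0 = op_mult d I A 0" by (simp_all add: is_orth_proj_zero)
  then show ?case by blast
next
  case (insert u U)
  then obtain P N where "is_orth_proj d I P" "P = op_mult d I A N" "\<forall>v\<in>U. op_apply d I P v = v"
    by auto
  then show ?case using orth_proj_extend[OF assms(1)] insert.prems by blast
qed

lemma orth_proj_mult_eq:
  assumes I: "finite I" and P: "is_orth_proj d I P" and Q: "op_supported d I Q"
    and R: "op_range d I Q \<subseteq> op_range d I P"
  shows "op_mult d I P Q = Q"
proof (intro ext)
  fix a b
  show "op_mult d I P Q a b = Q a b"
  proof (cases "a \<in> idx d I \<and> b \<in> idx d I")
    case True
    let ?e = "\<lambda>x. if x = b then 1 else 0"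
    obtain v where v: "op_apply d I Q ?e = op_apply d I P v"
      using R by (auto simp: op_range_def)
    have "op_apply d I (op_mult d I P Q) ?e = op_apply d I Q ?e"
      by (simp add: op_apply_mult v op_apply_mult[symmetric] orth_proj_idem[OF P])
    from arg_cong[OF this, of "\<lambda>f. f a"] show ?thesis using True I by (simp add: op_apply_unit)
  qed (use Q in \<open>auto simp: op_mult_def op_supported_def\<close>)
qed

lemma orth_proj_unique:
  assumes I: "finite I" and P: "is_orth_proj d I P" and Q: "is_orth_proj d I Q"
    and R: "op_range d I Q = op_range d I P"
  shows "P = Q"
proof -
  have PQ: "op_mult d I P Q = Q"
    using orth_proj_mult_eq[OF I P orth_proj_supported[OF Q]] R by simp
  have "P = op_adj (op_mult d I Q P)"
    using orth_proj_mult_eq[OF I Q orth_proj_supported[OF P]] R orth_proj_adj[OF P] by simp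
  also have "\<dots> = Q"
    using orth_proj_adj[OF P] orth_proj_adj[OF Q] PQ by (simp add: op_adj_mult)
  finally show ?thesis .
qed

lemma im_proj_eqI:
  assumes I: "finite I" and P: "is_orth_proj d I P" and rng: "op_range d I P = op_range d I A"
  shows "im_proj d I A = P"
  unfolding im_proj_def
proof (rule the_equality)
  show "is_orth_proj d I P \<and> op_range d I P = op_range d I A" using P rng by simp
  fix Q assume "is_orth_proj d I Q \<and> op_range d I Q = op_range d I A"
  then show "Q = P" using orth_proj_unique[OF I _ P, of Q] rng by simp
qed

lemma op_range_factor_eq:
  assumes PN: "P = op_mult d I A N" and PA: "op_mult d I P A = A"
  shows "op_range d I P = op_range d I A"
proof
  show "op_range d I P \<subseteq> op_range d I A"
    by (auto simp: op_range_def PN op_apply_mult)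
  show "op_range d I A \<subseteq> op_range d I P"
  proof
    fix y assume "y \<in> op_range d I A"
    then obtain v where "y = op_apply d I A v" by (auto simp: op_range_def)
    then have "y = op_apply d I P (op_apply d I A v)" by (simp add: op_apply_mult[symmetric] PA)
    then show "y \<in> op_range d I P" by (auto simp: op_range_def)
  qed
qed

lemma im_proj_props:
  assumes I: "finite I" and A: "op_supported d I A"
  obtains N where "is_orth_proj d I (im_proj d I A)" "op_mult d I (im_proj d I A) A = A"
    "im_proj d I A = op_mult d I A N"
proof -
  let ?col = "\<lambda>b. op_apply d I A (\<lambda>x. if x = b then 1 else 0)"
  have cols: "?col ` idx d I \<subseteq> op_range d I A" unfolding op_range_def by blast
  obtain P N where P: "is_orth_proj d I P" and PN: "P = op_mult d I A N"
    and fixed: "\<forall>v\<in>?col ` idx d I. op_apply d I P v = v"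
    using exists_orth_proj_fixing[OF I finite_imageI[OF finite_idx[OF I]] cols] by blast
  have PA: "op_mult d I P A = A"
  proof (intro ext)
    fix a b
    show "op_mult d I P A a b = A a b"
    proof (cases "a \<in> idx d I \<and> b \<in> idx d I")
      case True
      then have "op_apply d I (op_mult d I P A) (\<lambda>x. if x = b then 1 else 0) = ?col b"
        using fixed by (simp add: op_apply_mult)
      from arg_cong[OF this, of "\<lambda>f. f a"] show ?thesis using True I by (simp add: op_apply_unit)
    qed (use A in \<open>auto simp: op_mult_def op_supported_def\<close>)
  qed
  have "im_proj d I A = P" by (rule im_proj_eqI[OF I P op_range_factor_eq[OF PN PA]])
  then show ?thesis using that P PA PN by blast
qed

lemma vec_inner_cong:
  "(\<And>a. a \<in> idx d I \<Longrightarrow> v a = v' a) \<Longrightarrow> (\<And>a. a \<in> idx d I \<Longrightarrow> w a = w' a)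
    \<Longrightarrow> vec_inner d I v w = vec_inner d I v' w'"
  by (auto simp: vec_inner_def intro!: sum.cong)

lemma op_apply_cong: "(\<And>a. a \<in> idx d I \<Longrightarrow> v a = v' a) \<Longrightarrow> op_apply d I X v = op_apply d I X v'"
  by (auto simp: op_apply_def intro!: sum.cong)

lemma vec_inner_sandwich:
  assumes P: "is_orth_proj d I P"
    and f: "\<And>a. a \<in> idx d I \<Longrightarrow> op_apply d I P f a = f a"
    and g: "\<And>a. a \<in> idx d I \<Longrightarrow> op_apply d I P g a = g a"
  shows "vec_inner d I f (op_apply d I (op_mult d I P (op_mult d I X P)) g) = vec_inner d I f (op_apply d I X g)"
proof -
  have "vec_inner d I f (op_apply d I (op_mult d I P (op_mult d I X P)) g)
      = vec_inner d I (op_apply d I P f) (op_apply d I X (op_apply d I P g))"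
    by (simp add: op_apply_mult vec_inner_orth_proj[OF P])
  also have "op_apply d I X (op_apply d I P g) = op_apply d I X g"
    by (rule op_apply_cong) (rule g)
  finally show ?thesis by (auto intro!: vec_inner_cong f)
qed

section \<open>Reduced density matrices of a pure state\<close>

lemma rdm_supported: "op_supported d I (rdm n d \<psi> I)"
  by (simp add: op_supported_def rdm_def)

lemma cnj_dens: "cnj (dens n d \<psi> b a) = dens n d \<psi> a b"
  by (simp add: dens_def mult.commute)

lemma rdm_adj: "op_adj (rdm n d \<psi> I) = rdm n d \<psi> I"
  by (intro ext) (auto simp: op_adj_def rdm_def cnj_dens)

lemma supp_props:
  assumes "I \<subseteq> {1..n}"
  obtains N where "is_orth_proj d I (supp n d \<psi> I)"
    "op_mult d I (supp n d \<psi> I) (rdm n d \<psi> I) = rdm n d \<psi> I"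
    "supp n d \<psi> I = op_mult d I (rdm n d \<psi> I) N"
  using im_proj_props[OF finite_subset[OF assms] rdm_supported] unfolding supp_def by blast

lemma is_orth_proj_supp: "I \<subseteq> {1..n} \<Longrightarrow> is_orth_proj d I (supp n d \<psi> I)"
  by (rule supp_props)

lemma stensor_empty:
  "stensor d j {} X = (\<lambda>a b. X (\<lambda>i. 0) (\<lambda>i. 0) * (if a \<in> idx d {j} \<and> a = b then 1 else 0))"
proof (intro ext)
  fix a b
  show "stensor d j {} X a b = X (\<lambda>i. 0) (\<lambda>i. 0) * (if a \<in> idx d {j} \<and> a = b then 1 else 0)"
  proof (cases "a \<in> idx d {j} \<and> b \<in> idx d {j}")
    case True
    then have "a(j := 0) = (\<lambda>i. 0)" "b(j := 0) = (\<lambda>i. 0)" "a j = b j \<longleftrightarrow> a = b"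
      by (auto simp: idx_def fun_eq_iff) metis
    then show ?thesis using True by (simp add: stensor_def)
  qed (auto simp: stensor_def)
qed

lemma stensor_add: "stensor d j J (X + Y) = stensor d j J X + stensor d j J Y"
  by (intro ext) (simp add: stensor_def distrib_left)

lemma stensor_scale: "stensor d j J (\<lambda>a b. c * X a b) = (\<lambda>a b. c * stensor d j J X a b)"
  by (intro ext) (simp add: stensor_def mult_ac)

lemma stensor_mask:
  assumes j: "j \<notin> J" and M: "insert j J \<subseteq> M" and x: "x \<in> idx d M" and x': "x' \<in> idx d M"
  shows "stensor d j J X (mask (insert j J) x) (mask (insert j J) x')
       = (-1) ^ card {i\<in>J. i < j} * (if x j = x' j then X (mask J x) (mask J x') else 0)"
proof -
  have "mask (insert j J) x \<in> idx d (insert j J)" "mask (insert j J) x' \<in> idx d (insert j J)"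
    using mask_in_idx[OF x M] mask_in_idx[OF x' M] by auto
  moreover have "(mask (insert j J) y)(j := 0) = mask J y" for y
    using j by (auto simp: mask_def fun_eq_iff)
  ultimately show ?thesis by (simp add: stensor_def mask_def)
qed

interpretation forms: vector_space cscale
  by unfold_locales (simp_all add: cscale_def fun_eq_iff distrib_left distrib_right)

lemma restr_add: "restr n d \<psi> I (X + Y) = restr n d \<psi> I X + restr n d \<psi> I Y"
  by (simp add: restr_def op_mult_add_left op_mult_add_right)

lemma restr_scale: "restr n d \<psi> I (\<lambda>a b. c * X a b) = (\<lambda>a b. c * restr n d \<psi> I X a b)"
  by (simp add: restr_def op_mult_scale_left op_mult_scale_right)

lemma restr_zero: "restr n d \<psi> I 0 = 0"
  by (simp add: restr_def)

lemma restr_outside: "a \<notin> idx d I \<or> b \<notin> idx d I \<Longrightarrow> restr n d \<psi> I X a b = 0"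
  by (simp add: restr_def op_mult_outside)

lemma restr_scaled_id:
  assumes "I \<subseteq> {1..n}"
  shows "restr n d \<psi> I (\<lambda>a b. c * (if a \<in> idx d I \<and> a = b then 1 else 0)) = (\<lambda>a b. c * supp n d \<psi> I a b)"
proof -
  let ?P = "supp n d \<psi> I"
  have "op_mult d I (\<lambda>a b. if a \<in> idx d I \<and> a = b then 1 else 0) ?P = ?P"
  proof (intro ext)
    fix a b
    have "(\<Sum>c\<in>idx d I. (if a \<in> idx d I \<and> a = c then 1 else 0) * ?P c b) = ?P a b"
      if "a \<in> idx d I"
    proof -
      have "(\<Sum>c\<in>idx d I. (if a \<in> idx d I \<and> a = c then 1 else 0) * ?P c b) =
          (\<Sum>c\<in>idx d I. if a = c then ?P c b else 0)"
        using that by (intro sum.cong) auto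
      then show ?thesis using that finite_idx_subset[OF assms] by simp
    qed
    then show "op_mult d I (\<lambda>a b. if a \<in> idx d I \<and> a = b then 1 else 0) ?P a b = ?P a b"
      using orth_proj_supported[OF is_orth_proj_supp[OF assms]]
      by (auto simp: op_mult_def op_supported_def)
  qed
  then show ?thesis
    using orth_proj_idem[OF is_orth_proj_supp[OF assms]]
    by (simp add: restr_def op_mult_scale_left op_mult_scale_right)
qed

locale pure_state =
  fixes n :: nat and d :: "nat \<Rightarrow> nat" and \<psi> :: "(nat \<Rightarrow> nat) \<Rightarrow> complex"
  assumes normalized: "(\<Sum>a\<in>idx d {1..n}. (cmod (\<psi> a))\<^sup>2) = 1"
begin

definition slice :: "(nat \<Rightarrow> nat) \<Rightarrow> (nat \<Rightarrow> nat) \<Rightarrow> complex" where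
  "slice c = (\<lambda>a. \<psi> (a + c))"

lemma rdm_eq:
  assumes I: "I \<subseteq> {1..n}" and a: "a \<in> idx d I" and b: "b \<in> idx d I"
  shows "rdm n d \<psi> I a b = (\<Sum>c\<in>idx d ({1..n} - I). slice c a * cnj (slice c b))"
proof -
  have "dens n d \<psi> (\<lambda>i. a i + c i) (\<lambda>i. b i + c i) = slice c a * cnj (slice c b)"
    if c: "c \<in> idx d ({1..n} - I)" for c
  proof -
    have "a + c \<in> idx d {1..n}" "b + c \<in> idx d {1..n}"
      using add_in_idx[OF a c] add_in_idx[OF b c] I by (auto simp: Un_absorb1)
    then show ?thesis by (simp add: dens_def slice_def plus_fun_def)
  qed
  then show ?thesis using a b by (simp add: rdm_def)
qed

lemma slice_residual_perp:
  assumes I: "I \<subseteq> {1..n}" and a: "a \<in> idx d I" and b: "b \<in> idx d I"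
  shows "vec_inner d ({1..n} - I) (\<lambda>c. slice c b)
     (\<lambda>c. slice c a - op_apply d I (supp n d \<psi> I) (slice c) a) = 0"
proof -
  let ?J = "{1..n} - I" and ?P = "supp n d \<psi> I"
  have "vec_inner d ?J (\<lambda>c. slice c b) (\<lambda>c. slice c a - op_apply d I ?P (slice c) a)
      = (\<Sum>c\<in>idx d ?J. slice c a * cnj (slice c b))
        - (\<Sum>c\<in>idx d ?J. \<Sum>a'\<in>idx d I. ?P a a' * (slice c a' * cnj (slice c b)))"
    using a by (simp add: vec_inner_def op_apply_def algebra_simps sum_subtractf sum_distrib_left sum_distrib_right)
  also have "\<dots> = rdm n d \<psi> I a b - (\<Sum>a'\<in>idx d I. ?P a a' * rdm n d \<psi> I a' b)"
    by (subst sum.swap) (simp add: rdm_eq[OF I _ b] a sum_distrib_left)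
  also have "\<dots> = rdm n d \<psi> I a b - op_mult d I ?P (rdm n d \<psi> I) a b"
    using a b by (simp add: op_mult_def)
  also have "\<dots> = 0"
    by (metis I supp_props diff_self)
  finally show ?thesis .
qed

lemma supp_fixes_slice:
  assumes I: "I \<subseteq> {1..n}" and c: "c \<in> idx d ({1..n} - I)" and a: "a \<in> idx d I"
  shows "op_apply d I (supp n d \<psi> I) (slice c) a = slice c a"
proof -
  let ?J = "{1..n} - I" and ?P = "supp n d \<psi> I"
  define r where "r = (\<lambda>c. slice c a - op_apply d I ?P (slice c) a)"
  \<comment> \<open>\<open>r\<close> is a combination of the vectors \<open>\<lambda>c. slice c a'\<close>, all of which are orthogonal to it.\<close>
  have cnj_r: "cnj (r c) = cnj (slice c a) - (\<Sum>a'\<in>idx d I. cnj (?P a a') * cnj (slice c a'))" for c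
    using a by (simp add: r_def op_apply_def cnj_sum)
  have "vec_inner d ?J r r = (\<Sum>c\<in>idx d ?J. cnj (slice c a) * r c)
      - (\<Sum>c\<in>idx d ?J. \<Sum>a'\<in>idx d I. cnj (?P a a') * (cnj (slice c a') * r c))"
    by (simp add: vec_inner_def cnj_r left_diff_distrib sum_subtractf sum_distrib_right mult.assoc)
  also have "\<dots> = vec_inner d ?J (\<lambda>c. slice c a) r
      - (\<Sum>a'\<in>idx d I. cnj (?P a a') * vec_inner d ?J (\<lambda>c. slice c a') r)"
    by (subst sum.swap) (simp add: vec_inner_def sum_distrib_left)
  also have "\<dots> = 0"
    using slice_residual_perp[OF I a] a by (simp add: r_def)
  finally have "r c = 0"
    using vec_inner_self_eq_0[OF _ _ c] by blast
  then show ?thesis by (simp add: r_def)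
qed

lemma rdm_sandwich:
  assumes I: "I \<subseteq> {1..n}" and a: "a \<in> idx d I" and b: "b \<in> idx d I"
  shows "op_mult d I (rdm n d \<psi> I) (op_mult d I W (rdm n d \<psi> I)) a b =
    (\<Sum>c\<in>idx d ({1..n} - I). \<Sum>c'\<in>idx d ({1..n} - I).
       slice c a * vec_inner d I (slice c) (op_apply d I W (slice c')) * cnj (slice c' b))"
proof -
  let ?S = "idx d I" and ?K = "idx d ({1..n} - I)"
  have "op_mult d I (rdm n d \<psi> I) (op_mult d I W (rdm n d \<psi> I)) a b =
    (\<Sum>a1\<in>?S. \<Sum>a2\<in>?S. \<Sum>c'\<in>?K. \<Sum>c\<in>?K.
       slice c a * (cnj (slice c a1) * W a1 a2 * slice c' a2) * cnj (slice c' b))"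
    using a b by (simp add: op_mult_def rdm_eq[OF I] sum_distrib_left sum_distrib_right mult_ac)
  also have "\<dots> = (\<Sum>c'\<in>?K. \<Sum>c\<in>?K. \<Sum>a1\<in>?S. \<Sum>a2\<in>?S.
       slice c a * (cnj (slice c a1) * W a1 a2 * slice c' a2) * cnj (slice c' b))"
    by (rule sum_swap_pairs)
  also have "\<dots> = (\<Sum>c\<in>?K. \<Sum>c'\<in>?K. \<Sum>a1\<in>?S. \<Sum>a2\<in>?S.
       slice c a * (cnj (slice c a1) * W a1 a2 * slice c' a2) * cnj (slice c' b))"
    by (rule sum.swap)
  also have "\<dots> = (\<Sum>c\<in>?K. \<Sum>c'\<in>?K.
       slice c a * vec_inner d I (slice c) (op_apply d I W (slice c')) * cnj (slice c' b))"
    by (simp add: vec_inner_def op_apply_def sum_distrib_left sum_distrib_right mult_ac)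
  finally show ?thesis .
qed

lemma restr_eq_0I:
  assumes I: "I \<subseteq> {1..n}"
    and W: "\<And>c c'. c \<in> idx d ({1..n} - I) \<Longrightarrow> c' \<in> idx d ({1..n} - I) \<Longrightarrow>
       vec_inner d I (slice c) (op_apply d I W (slice c')) = 0"
  shows "restr n d \<psi> I W = 0"
proof -
  obtain N where N: "supp n d \<psi> I = op_mult d I (rdm n d \<psi> I) N"
    using supp_props[OF I] by blast
  have N': "supp n d \<psi> I = op_mult d I (op_adj N) (rdm n d \<psi> I)"
    using orth_proj_adj[OF is_orth_proj_supp[OF I]] N by (metis op_adj_mult rdm_adj)
  have "restr n d \<psi> I W =
      op_mult d I (op_adj N) (op_mult d I (op_mult d I (rdm n d \<psi> I) (op_mult d I W (rdm n d \<psi> I))) N)"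
    unfolding restr_def by (subst N', subst N) (simp add: op_mult_assoc)
  moreover have "op_mult d I (rdm n d \<psi> I) (op_mult d I W (rdm n d \<psi> I)) = 0"
  proof (intro ext)
    fix a b
    show "op_mult d I (rdm n d \<psi> I) (op_mult d I W (rdm n d \<psi> I)) a b = 0 a b"
      by (cases "a \<in> idx d I \<and> b \<in> idx d I") (auto simp: rdm_sandwich[OF I] W op_mult_outside)
  qed
  ultimately show ?thesis by simp
qed

lemma supp_empty: "supp n d \<psi> {} = (\<lambda>a b. if a = (\<lambda>i. 0) \<and> b = (\<lambda>i. 0) then 1 else 0)"
proof -
  obtain x where x: "x \<in> idx d {1..n}" "\<psi> x \<noteq> 0"
    using normalized by (metis (no_types, lifting) norm_zero power_zero_numeral sum.neutral zero_neq_one)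
  have "op_apply d {} (supp n d \<psi> {}) (slice x) (\<lambda>i. 0) = slice x (\<lambda>i. 0)"
    by (rule supp_fixes_slice) (use x in \<open>auto simp: idx_empty\<close>)
  then have "supp n d \<psi> {} (\<lambda>i. 0) (\<lambda>i. 0) * \<psi> x = \<psi> x"
    by (simp add: op_apply_def idx_empty slice_def plus_fun_def)
  then have "supp n d \<psi> {} (\<lambda>i. 0) (\<lambda>i. 0) = 1" using x(2) by simp
  then show ?thesis
    using orth_proj_supported[OF is_orth_proj_supp[of "{}"]]
    by (intro ext) (auto simp: op_supported_def idx_empty)
qed

text \<open>\<open>\<langle>\<psi>| A \<otimes> B |\<psi>\<rangle>\<close> for \<open>A\<close> acting on \<open>H\<^sub>I\<close> and \<open>B\<close> on the complementary factors.\<close>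

definition expval :: "nat set \<Rightarrow> op \<Rightarrow> op \<Rightarrow> complex" where
  "expval I A B = (\<Sum>x\<in>idx d {1..n}. \<Sum>x'\<in>idx d {1..n}. cnj (\<psi> x) * A (mask I x) (mask I x') *
      B (mask ({1..n} - I) x) (mask ({1..n} - I) x') * \<psi> x')"

lemma expval_split:
  assumes I: "I \<subseteq> {1..n}"
  shows "expval I A B = (\<Sum>c\<in>idx d ({1..n} - I). \<Sum>c'\<in>idx d ({1..n} - I).
     B c c' * vec_inner d I (slice c) (op_apply d I A (slice c')))"
proof -
  let ?S = "idx d I" and ?K = "idx d ({1..n} - I)"
  have disj: "I \<inter> ({1..n} - I) = {}" by auto
  have split: "(\<Sum>x\<in>idx d {1..n}. f x) = (\<Sum>a\<in>?S. \<Sum>c\<in>?K. f (a + c))" for f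
    using sum_idx_Un[OF disj finite_subset[OF I] finite_Diff, where d = d and f = f] I
    by (simp add: Un_absorb1)
  have "expval I A B = (\<Sum>a\<in>?S. \<Sum>c\<in>?K. \<Sum>a'\<in>?S. \<Sum>c'\<in>?K.
      cnj (slice c a) * A a a' * B c c' * slice c' a')"
    unfolding expval_def split slice_def
    by (intro sum.cong refl) (simp only: mask_add_left[OF _ _ disj] mask_add_right[OF _ _ disj])
  also have "\<dots> = (\<Sum>a\<in>?S. \<Sum>a'\<in>?S. \<Sum>c\<in>?K. \<Sum>c'\<in>?K.
      cnj (slice c a) * A a a' * B c c' * slice c' a')"
    by (rule sum.cong[OF refl], rule sum.swap)
  also have "\<dots> = (\<Sum>c\<in>?K. \<Sum>c'\<in>?K. \<Sum>a\<in>?S. \<Sum>a'\<in>?S.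
      cnj (slice c a) * A a a' * B c c' * slice c' a')"
    by (rule sum_swap_pairs)
  also have "\<dots> = (\<Sum>c\<in>?K. \<Sum>c'\<in>?K. B c c' * vec_inner d I (slice c) (op_apply d I A (slice c')))"
    by (simp add: vec_inner_def op_apply_def sum_distrib_left mult_ac)
  finally show ?thesis .
qed

lemma expval_swap:
  assumes "I \<subseteq> {1..n}"
  shows "expval I A B = expval ({1..n} - I) B A"
proof -
  have "{1..n} - ({1..n} - I) = I" using assms by auto
  then show ?thesis unfolding expval_def by (simp add: mult_ac)
qed

lemma expval_restr_left:
  assumes I: "I \<subseteq> {1..n}"
  shows "expval I (restr n d \<psi> I X) B = expval I X B"
  unfolding expval_split[OF I] restr_def
  by (intro sum.cong refl arg_cong2[where f = "(*)"] vec_inner_sandwich is_orth_proj_supp I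
      supp_fixes_slice)

lemma expval_restr_right:
  assumes I: "I \<subseteq> {1..n}"
  shows "expval I A (restr n d \<psi> ({1..n} - I) Y) = expval I A Y"
  using expval_restr_left[of "{1..n} - I" Y A] expval_swap[OF I] by simp

lemma expval_add_left: "expval I (A + A') B = expval I A B + expval I A' B"
  by (simp add: expval_def distrib_left distrib_right sum.distrib)

lemma expval_add_right: "expval I A (B + B') = expval I A B + expval I A B'"
  by (simp add: expval_def distrib_left distrib_right sum.distrib)

lemma expval_scale_left: "expval I (\<lambda>a b. c * A a b) B = c * expval I A B"
  by (simp add: expval_def sum_distrib_left mult_ac)

lemma expval_scale_right: "expval I A (\<lambda>a b. c * B a b) = c * expval I A B"
  by (simp add: expval_def sum_distrib_left mult_ac)

lemma expval_zero_right: "expval I A 0 = 0"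
  by (simp add: expval_def)

lemma expval_sum_left: "expval I (\<lambda>a b. \<Sum>j\<in>J. F j a b) B = (\<Sum>j\<in>J. expval I (F j) B)"
  unfolding expval_def by (simp add: sum_distrib_left sum_distrib_right sum.swap[of _ J])

lemma expval_sum_right: "expval I A (\<lambda>a b. \<Sum>j\<in>J. F j a b) = (\<Sum>j\<in>J. expval I A (F j))"
  unfolding expval_def by (simp add: sum_distrib_left sum_distrib_right sum.swap[of _ J])

lemma expval_restr_nondeg:
  assumes I: "I \<subseteq> {1..n}" and nz: "restr n d \<psi> I X \<noteq> 0"
  shows "\<exists>Y. expval I (restr n d \<psi> I X) (restr n d \<psi> ({1..n} - I) Y) \<noteq> 0"
proof (rule ccontr)
  let ?K = "idx d ({1..n} - I)"
  assume "\<nexists>Y. expval I (restr n d \<psi> I X) (restr n d \<psi> ({1..n} - I) Y) \<noteq> 0"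
  then have vanish: "expval I X Y = 0" for Y
    by (metis expval_restr_left[OF I] expval_restr_right[OF I])
  have "vec_inner d I (slice c0) (op_apply d I X (slice c0')) = 0"
    if "c0 \<in> ?K" "c0' \<in> ?K" for c0 c0'
  proof -
    let ?L = "\<lambda>c c'. vec_inner d I (slice c) (op_apply d I X (slice c'))"
    have "expval I X (\<lambda>c c'. if c = c0 \<and> c' = c0' then 1 else 0) =
        (\<Sum>c\<in>?K. if c = c0 then (\<Sum>c'\<in>?K. if c' = c0' then ?L c c' else 0) else 0)"
      unfolding expval_split[OF I] by (auto intro!: sum.cong)
    also have "\<dots> = ?L c0 c0'"
      using that by (simp add: finite_idx)
    finally have "expval I X (\<lambda>c c'. if c = c0 \<and> c' = c0' then 1 else 0) = ?L c0 c0'" .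
    then show ?thesis using vanish by simp
  qed
  then have "restr n d \<psi> I X = 0" by (rule restr_eq_0I[OF I])
  then show False using nz by simp
qed

section \<open>Entanglement forms and the coboundary\<close>

abbreviation \<Omega> :: "nat \<Rightarrow> eform set" where "\<Omega> k \<equiv> eforms n d \<psi> k"

abbreviation \<delta> :: "nat \<Rightarrow> eform \<Rightarrow> eform" where "\<delta> k \<equiv> cobound n d \<psi> k"

definition ksubsets :: "nat \<Rightarrow> nat set set" where
  "ksubsets k = {I. I \<subseteq> {1..n} \<and> card I = k}"

lemma finite_ksubsets: "finite (ksubsets k)"
  unfolding ksubsets_def by (rule finite_subset[of _ "Pow {1..n}"]) auto

lemma ksubsets_0: "ksubsets 0 = {{}}"
proof -
  have "card I = 0 \<longleftrightarrow> I = {}" if "I \<subseteq> {1..n}" for I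
    using finite_subset[OF that] by auto
  then show ?thesis by (auto simp: ksubsets_def)
qed

lemma restr_empty:
  "restr n d \<psi> {} X = (\<lambda>a b. if a = (\<lambda>i. 0) \<and> b = (\<lambda>i. 0) then X (\<lambda>i. 0) (\<lambda>i. 0) else 0)"
  by (intro ext) (simp add: restr_def op_mult_def idx_empty supp_empty)

text \<open>Although \<open>\<Omega>\<^sup>0\<close> is defined separately, \<open>s\<^sub>{} = 1\<close> makes it fit the description of the other degrees.\<close>

lemma eforms_iff:
  "\<omega> \<in> \<Omega> k \<longleftrightarrow> (\<forall>I. if I \<in> ksubsets k then \<exists>X. \<omega> I = restr n d \<psi> I X else \<omega> I = 0)"
proof (cases "k = 0")
  case True
  have "(\<exists>X. \<omega> {} = restr n d \<psi> {} X) \<longleftrightarrow> (\<forall>a b. a \<noteq> (\<lambda>i. 0) \<or> b \<noteq> (\<lambda>i. 0) \<longrightarrow> \<omega> {} a b = 0)"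
  proof
    assume "\<forall>a b. a \<noteq> (\<lambda>i. 0) \<or> b \<noteq> (\<lambda>i. 0) \<longrightarrow> \<omega> {} a b = 0"
    then have "\<omega> {} = restr n d \<psi> {} (\<omega> {})" by (intro ext) (auto simp: restr_empty)
    then show "\<exists>X. \<omega> {} = restr n d \<psi> {} X" by blast
  qed (auto simp: restr_empty)
  moreover have "(\<forall>I. if I \<in> ksubsets 0 then P I else \<omega> I = 0) \<longleftrightarrow> (\<forall>I. I \<noteq> {} \<longrightarrow> \<omega> I = 0) \<and> P {}"
    for P by (auto simp: ksubsets_0)
  ultimately show ?thesis using True by (simp add: eforms_def)
qed (simp add: eforms_def ksubsets_def)

lemma eforms_restr: "\<omega> \<in> \<Omega> k \<Longrightarrow> I \<in> ksubsets k \<Longrightarrow> \<exists>X. \<omega> I = restr n d \<psi> I X"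
  by (metis eforms_iff)

lemma eforms_zero: "\<omega> \<in> \<Omega> k \<Longrightarrow> I \<notin> ksubsets k \<Longrightarrow> \<omega> I = 0"
  by (metis eforms_iff)

lemma eformsI:
  "(\<And>I. I \<in> ksubsets k \<Longrightarrow> \<exists>X. \<omega> I = restr n d \<psi> I X) \<Longrightarrow> (\<And>I. I \<notin> ksubsets k \<Longrightarrow> \<omega> I = 0)
    \<Longrightarrow> \<omega> \<in> \<Omega> k"
  by (simp add: eforms_iff)

lemma subspace_eforms: "forms.subspace (\<Omega> k)"
proof (rule forms.subspaceI)
  show "0 \<in> \<Omega> k" by (rule eformsI) (metis restr_zero zero_fun_apply, simp)
next
  fix \<omega> \<eta> assume \<omega>: "\<omega> \<in> \<Omega> k" and \<eta>: "\<eta> \<in> \<Omega> k"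
  show "\<omega> + \<eta> \<in> \<Omega> k"
  proof (rule eformsI)
    fix I assume "I \<in> ksubsets k"
    then obtain X Y where "\<omega> I = restr n d \<psi> I X" "\<eta> I = restr n d \<psi> I Y"
      using eforms_restr \<omega> \<eta> by meson
    then show "\<exists>Z. (\<omega> + \<eta>) I = restr n d \<psi> I Z" by (metis plus_fun_apply restr_add)
  qed (use eforms_zero[OF \<omega>] eforms_zero[OF \<eta>] in simp)
next
  fix c \<omega> assume \<omega>: "\<omega> \<in> \<Omega> k"
  show "cscale c \<omega> \<in> \<Omega> k"
  proof (rule eformsI)
    fix I assume "I \<in> ksubsets k"
    then obtain X where "\<omega> I = restr n d \<psi> I X" using eforms_restr \<omega> by meson
    then have "cscale c \<omega> I = restr n d \<psi> I (\<lambda>a b. c * X a b)" by (simp add: cscale_def restr_scale)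
    then show "\<exists>Z. cscale c \<omega> I = restr n d \<psi> I Z" by blast
  qed (use eforms_zero[OF \<omega>] in \<open>simp add: cscale_def fun_eq_iff\<close>)
qed

lemma eforms_support:
  assumes "\<omega> \<in> \<Omega> k" "\<omega> J a b \<noteq> 0"
  shows "J \<subseteq> {1..n} \<and> a \<in> idx d J \<and> b \<in> idx d J"
proof -
  have J: "J \<in> ksubsets k" using eforms_zero[OF assms(1), of J] assms(2) by (metis zero_fun_apply)
  then obtain X where "\<omega> J = restr n d \<psi> J X" using eforms_restr[OF assms(1)] by blast
  then have "a \<in> idx d J \<and> b \<in> idx d J" using assms(2) by (metis restr_outside)
  then show ?thesis using J by (simp add: ksubsets_def)
qed

definition matrix_unit :: "nat set \<times> (nat \<Rightarrow> nat) \<times> (nat \<Rightarrow> nat) \<Rightarrow> eform" where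
  "matrix_unit p = (\<lambda>J x y. if (J, x, y) = p then 1 else 0)"

definition entry_positions :: "(nat set \<times> (nat \<Rightarrow> nat) \<times> (nat \<Rightarrow> nat)) set" where
  "entry_positions = (SIGMA J:Pow {1..n}. idx d J \<times> idx d J)"

lemma finite_entry_positions: "finite entry_positions"
  unfolding entry_positions_def by (intro finite_SigmaI) (auto intro: finite_idx_subset)

lemma eforms_span: "\<Omega> k \<subseteq> forms.span (matrix_unit ` entry_positions)"
proof
  fix \<omega> assume \<omega>: "\<omega> \<in> \<Omega> k"
  have "\<omega> = (\<Sum>p\<in>entry_positions. cscale (case_prod (\<lambda>J. case_prod (\<omega> J)) p) (matrix_unit p))"
  proof (intro ext)
    fix J x y
    have "(\<Sum>p\<in>entry_positions. cscale (case_prod (\<lambda>J. case_prod (\<omega> J)) p) (matrix_unit p)) J x y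
        = (\<Sum>p\<in>entry_positions. if p = (J, x, y) then \<omega> J x y else 0)"
      unfolding sum_apply_fun by (intro sum.cong refl) (auto simp: cscale_def matrix_unit_def)
    also have "\<dots> = \<omega> J x y"
      using finite_entry_positions eforms_support[OF \<omega>, of J x y] by (auto simp: entry_positions_def)
    finally show "\<omega> J x y = (\<Sum>p\<in>entry_positions. cscale (case_prod (\<lambda>J. case_prod (\<omega> J)) p) (matrix_unit p)) J x y"
      by simp
  qed
  also have "\<dots> \<in> forms.span (matrix_unit ` entry_positions)"
    by (intro forms.span_sum forms.span_scale forms.span_base imageI)
  finally show "\<omega> \<in> forms.span (matrix_unit ` entry_positions)" .
qed

text \<open>The factor \<open>m\<close> of \<open>d\<^sup>m\<close>; \<open>d\<^sup>0\<close> carries none, so the coefficient is 1 there.\<close>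

definition cob_coeff :: "nat \<Rightarrow> complex" where
  "cob_coeff m = (if m = 0 then 1 else of_nat m)"

lemma cob_coeff_nonzero: "cob_coeff m \<noteq> 0"
  by (simp add: cob_coeff_def)

definition tensor_sum :: "eform \<Rightarrow> nat set \<Rightarrow> op" where
  "tensor_sum \<omega> I = (\<lambda>a b. \<Sum>j\<in>I. stensor d j (I - {j}) (\<omega> (I - {j})) a b)"

lemma cobound_eq:
  assumes "m < n"
  shows "\<delta> m \<omega> I =
    (if I \<in> ksubsets (Suc m) then (\<lambda>a b. cob_coeff m * restr n d \<psi> I (tensor_sum \<omega> I) a b) else 0)"
proof (cases "m = 0")
  case True
  have singleton: "(\<exists>j\<in>{1..n}. I = {j}) \<longleftrightarrow> I \<in> ksubsets (Suc 0)"
    by (auto simp: ksubsets_def card_1_singleton_iff)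
  have "restr n d \<psi> {j} (tensor_sum \<omega> {j}) = (\<lambda>a b. \<omega> {} (\<lambda>i. 0) (\<lambda>i. 0) * supp n d \<psi> {j} a b)"
    if "j \<in> {1..n}" for j
    using restr_scaled_id[of "{j}"] that by (simp add: tensor_sum_def stensor_empty)
  then show ?thesis
    using True singleton by (auto simp: cobound_def cob_coeff_def)
next
  case False
  then show ?thesis
    using assms by (auto simp: cobound_def cob_coeff_def tensor_sum_def ksubsets_def restr_scale[symmetric])
qed

lemma cobound_eq_0: "n \<le> m \<Longrightarrow> \<delta> m \<omega> = 0"
  by (auto simp: cobound_def)

lemma cobound_in_eforms: "m < n \<Longrightarrow> \<delta> m \<omega> \<in> \<Omega> (Suc m)"
  by (rule eformsI) (auto simp: cobound_eq restr_scale[symmetric])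

lemma tensor_sum_add: "tensor_sum (\<omega> + \<eta>) I = tensor_sum \<omega> I + tensor_sum \<eta> I"
  by (intro ext) (simp add: tensor_sum_def stensor_add sum.distrib)

lemma tensor_sum_scale: "tensor_sum (\<lambda>I a b. c * \<omega> I a b) I = (\<lambda>a b. c * tensor_sum \<omega> I a b)"
  by (simp add: tensor_sum_def stensor_scale sum_distrib_left)

lemma cobound_add: "\<delta> m (\<omega> + \<eta>) = \<delta> m \<omega> + \<delta> m \<eta>"
proof (cases "m < n")
  case True
  show ?thesis
  proof (rule ext)
    fix I
    show "\<delta> m (\<omega> + \<eta>) I = (\<delta> m \<omega> + \<delta> m \<eta>) I"
      by (cases "I \<in> ksubsets (Suc m)")
        (simp_all add: cobound_eq[OF True] tensor_sum_add restr_add distrib_left fun_eq_iff)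
  qed
qed (simp add: cobound_eq_0)

lemma cobound_scale: "\<delta> m (cscale c \<omega>) = cscale c (\<delta> m \<omega>)"
proof (cases "m < n")
  case True
  show ?thesis
  proof (rule ext)
    fix I
    show "\<delta> m (cscale c \<omega>) I = cscale c (\<delta> m \<omega>) I"
      by (cases "I \<in> ksubsets (Suc m)")
        (simp_all add: cobound_eq[OF True] tensor_sum_scale restr_scale cscale_def mult_ac fun_eq_iff)
  qed
qed (simp add: cobound_eq_0 cscale_def fun_eq_iff)

lemma linear_cobound: "Vector_Spaces.linear cscale cscale (\<delta> m)"
  using forms.vector_space_axioms cobound_add cobound_scale by (simp add: Vector_Spaces.linear_iff)



section \<open>The pairing\<close>

text \<open>The signs \<open>(-1)\<^sup>\<Sigma>\<^sup>I\<close> make the coboundary skew-adjoint, see \<open>pairing_cobound\<close>.\<close>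

definition pairing_sign :: "nat set \<Rightarrow> complex" where
  "pairing_sign I = (-1) ^ (\<Sum>I)"

definition pairing :: "nat \<Rightarrow> eform \<Rightarrow> eform \<Rightarrow> complex" where
  "pairing k \<omega> \<eta> = (\<Sum>I\<in>ksubsets k. pairing_sign I * expval I (\<omega> I) (\<eta> ({1..n} - I)))"

definition ins_sign :: "nat \<Rightarrow> nat set \<Rightarrow> complex" where
  "ins_sign j J = (-1) ^ card {i\<in>J. i < j}"

definition expval_id :: "eform \<Rightarrow> eform \<Rightarrow> nat set \<Rightarrow> nat \<Rightarrow> complex" where
  "expval_id \<omega> \<eta> J j = (\<Sum>x\<in>idx d {1..n}. \<Sum>x'\<in>idx d {1..n}. cnj (\<psi> x) *
     (if x j = x' j then \<omega> J (mask J x) (mask J x') else 0) *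
     \<eta> ({1..n} - J - {j}) (mask ({1..n} - J - {j}) x) (mask ({1..n} - J - {j}) x') * \<psi> x')"

lemma sign_identity:
  assumes J: "J \<subseteq> {1..n}" and j: "j \<in> {1..n}" "j \<notin> J"
  shows "pairing_sign (insert j J) * ins_sign j J = - (pairing_sign J * ins_sign j ({1..n} - J - {j}))"
proof -
  have finJ: "finite J" using finite_subset[OF J] by simp
  let ?p = "card {i\<in>J. i < j}" and ?q = "card {i\<in>{1..n} - J - {j}. i < j}"
  have below: "{i\<in>J. i < j} \<union> {i\<in>{1..n} - J - {j}. i < j} = {1..<j}" using J j by auto
  have "?p + ?q = card {1..<j}"
    by (subst below[symmetric], rule card_Un_disjoint[symmetric]) (use finJ in auto)
  then have pq: "j = Suc (?p + ?q)" using j by simp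
  have sign_j: "pairing_sign (insert j J) = (-1) ^ j * pairing_sign J"
    using finJ j by (simp add: pairing_sign_def power_add)
  have "(-1::complex) ^ ?p * (-1) ^ ?p = 1"
    by (simp add: power_add[symmetric])
  moreover have "(-1::complex) ^ j = - ((-1) ^ ?p * (-1) ^ ?q)"
    by (subst pq) (simp add: power_add)
  ultimately show ?thesis
    unfolding sign_j ins_sign_def by (simp add: mult_ac)
qed

lemma expval_stensor_left:
  assumes I: "I \<subseteq> {1..n}" and j: "j \<in> I"
  shows "expval I (stensor d j (I - {j}) (\<omega> (I - {j}))) (\<eta> ({1..n} - I))
       = ins_sign j (I - {j}) * expval_id \<omega> \<eta> (I - {j}) j"
proof -
  have ins: "insert j (I - {j}) = I" using j by auto
  have rest: "{1..n} - (I - {j}) - {j} = {1..n} - I" using j by auto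
  have "stensor d j (I - {j}) (\<omega> (I - {j})) (mask I x) (mask I x') = ins_sign j (I - {j}) *
      (if x j = x' j then \<omega> (I - {j}) (mask (I - {j}) x) (mask (I - {j}) x') else 0)"
    if "x \<in> idx d {1..n}" "x' \<in> idx d {1..n}" for x x'
    using stensor_mask[of j "I - {j}" "{1..n}" x d x'] that I unfolding ins ins_sign_def by auto
  then show ?thesis
    unfolding expval_def expval_id_def rest sum_distrib_left by (intro sum.cong refl) (simp add: mult_ac)
qed

lemma expval_stensor_right:
  assumes J: "J \<subseteq> {1..n}" and j: "j \<in> {1..n} - J"
  shows "expval J (\<omega> J) (stensor d j ({1..n} - J - {j}) (\<eta> ({1..n} - J - {j})))
       = ins_sign j ({1..n} - J - {j}) * expval_id \<omega> \<eta> J j"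
proof -
  have ins: "insert j ({1..n} - J - {j}) = {1..n} - J" using j by auto
  have "stensor d j ({1..n} - J - {j}) (\<eta> ({1..n} - J - {j})) (mask ({1..n} - J) x) (mask ({1..n} - J) x')
      = ins_sign j ({1..n} - J - {j}) * (if x j = x' j then
          \<eta> ({1..n} - J - {j}) (mask ({1..n} - J - {j}) x) (mask ({1..n} - J - {j}) x') else 0)"
    if "x \<in> idx d {1..n}" "x' \<in> idx d {1..n}" for x x'
    using stensor_mask[of j "{1..n} - J - {j}" "{1..n}" x d x'] that unfolding ins ins_sign_def by auto
  then show ?thesis
    unfolding expval_def expval_id_def sum_distrib_left by (intro sum.cong refl) (simp add: mult_ac)
qed

lemma pairing_cobound_left:
  assumes k: "k < n"
  shows "pairing (Suc k) (\<delta> k \<omega>) \<eta> = cob_coeff k *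
    (\<Sum>I\<in>ksubsets (Suc k). \<Sum>j\<in>I. pairing_sign I * ins_sign j (I - {j}) * expval_id \<omega> \<eta> (I - {j}) j)"
proof -
  have "expval I (\<delta> k \<omega> I) (\<eta> ({1..n} - I)) =
      cob_coeff k * (\<Sum>j\<in>I. ins_sign j (I - {j}) * expval_id \<omega> \<eta> (I - {j}) j)"
    if I: "I \<in> ksubsets (Suc k)" for I
  proof -
    have I': "I \<subseteq> {1..n}" using I by (simp add: ksubsets_def)
    have "expval I (\<delta> k \<omega> I) (\<eta> ({1..n} - I)) = cob_coeff k * expval I (tensor_sum \<omega> I) (\<eta> ({1..n} - I))"
      using I by (simp add: cobound_eq[OF k] expval_scale_left expval_restr_left[OF I'])
    also have "\<dots> = cob_coeff k * (\<Sum>j\<in>I. ins_sign j (I - {j}) * expval_id \<omega> \<eta> (I - {j}) j)"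
      unfolding tensor_sum_def expval_sum_left using expval_stensor_left[OF I'] by simp
    finally show ?thesis .
  qed
  then show ?thesis
    unfolding pairing_def by (simp add: sum_distrib_left mult_ac)
qed

lemma pairing_cobound_right:
  assumes k: "k < n"
  shows "pairing k \<omega> (\<delta> (n - k - 1) \<eta>) = cob_coeff (n - k - 1) *
    (\<Sum>J\<in>ksubsets k. \<Sum>j\<in>{1..n} - J. pairing_sign J * ins_sign j ({1..n} - J - {j}) * expval_id \<omega> \<eta> J j)"
proof -
  have "expval J (\<omega> J) (\<delta> (n - k - 1) \<eta> ({1..n} - J)) = cob_coeff (n - k - 1) *
      (\<Sum>j\<in>{1..n} - J. ins_sign j ({1..n} - J - {j}) * expval_id \<omega> \<eta> J j)"
    if J: "J \<in> ksubsets k" for J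
  proof -
    have J': "J \<subseteq> {1..n}" "card J = k" using J by (auto simp: ksubsets_def)
    have "{1..n} - J \<in> ksubsets (Suc (n - k - 1))"
      using J' k by (auto simp: ksubsets_def card_Diff_subset finite_subset)
    then have "expval J (\<omega> J) (\<delta> (n - k - 1) \<eta> ({1..n} - J)) =
        cob_coeff (n - k - 1) * expval J (\<omega> J) (tensor_sum \<eta> ({1..n} - J))"
      using k by (simp add: cobound_eq expval_scale_right expval_restr_right[OF J'(1)])
    also have "\<dots> = cob_coeff (n - k - 1) *
        (\<Sum>j\<in>{1..n} - J. ins_sign j ({1..n} - J - {j}) * expval_id \<omega> \<eta> J j)"
      unfolding tensor_sum_def expval_sum_right using expval_stensor_right[OF J'(1)] by simp
    finally show ?thesis .
  qed
  then show ?thesis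
    unfolding pairing_def by (simp add: sum_distrib_left mult_ac)
qed

lemma pairing_cobound:
  assumes k: "k < n"
  shows "cob_coeff (n - k - 1) * pairing (Suc k) (\<delta> k \<omega>) \<eta> = - (cob_coeff k * pairing k \<omega> (\<delta> (n - k - 1) \<eta>))"
proof -
  define G where "G J j = pairing_sign (insert j J) * ins_sign j J * expval_id \<omega> \<eta> J j" for J j
  have "(\<Sum>I\<in>ksubsets (Suc k). \<Sum>j\<in>I. pairing_sign I * ins_sign j (I - {j}) * expval_id \<omega> \<eta> (I - {j}) j)
      = (\<Sum>I\<in>ksubsets (Suc k). \<Sum>j\<in>I. G (I - {j}) j)"
    by (intro sum.cong refl) (simp add: G_def insert_absorb)
  also have "\<dots> = (\<Sum>J\<in>ksubsets k. \<Sum>j\<in>{1..n} - J. G J j)"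
    unfolding ksubsets_def by (rule sum_subsets_Suc_remove) simp
  also have "\<dots> = - (\<Sum>J\<in>ksubsets k. \<Sum>j\<in>{1..n} - J.
      pairing_sign J * ins_sign j ({1..n} - J - {j}) * expval_id \<omega> \<eta> J j)"
    unfolding sum_negf[symmetric] G_def
    by (intro sum.cong refl) (use sign_identity in \<open>auto simp: ksubsets_def mult_ac\<close>)
  finally show ?thesis
    unfolding pairing_cobound_left[OF k] pairing_cobound_right[OF k] by (simp add: mult_ac)
qed


lemma pairing_add_left: "pairing k (\<omega> + \<omega>') \<eta> = pairing k \<omega> \<eta> + pairing k \<omega>' \<eta>"
  by (simp add: pairing_def expval_add_left distrib_left sum.distrib)

lemma pairing_scale_left: "pairing k (cscale c \<omega>) \<eta> = c * pairing k \<omega> \<eta>"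
  by (simp add: pairing_def cscale_def expval_scale_left sum_distrib_left mult_ac)

lemma pairing_add_right: "pairing k \<omega> (\<eta> + \<eta>') = pairing k \<omega> \<eta> + pairing k \<omega> \<eta>'"
  by (simp add: pairing_def expval_add_right distrib_left sum.distrib)

lemma pairing_scale_right: "pairing k \<omega> (cscale c \<eta>) = c * pairing k \<omega> \<eta>"
  by (simp add: pairing_def cscale_def expval_scale_right sum_distrib_left mult_ac)

lemma pairing_span_eq_0:
  assumes "\<And>\<eta>. \<eta> \<in> C \<Longrightarrow> pairing k \<omega> \<eta> = 0" and "\<eta> \<in> forms.span C"
  shows "pairing k \<omega> \<eta> = 0"
proof -
  have "forms.subspace {\<eta>. pairing k \<omega> \<eta> = 0}"
    by (rule forms.subspaceI) (simp_all add: pairing_add_right pairing_scale_right,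
        simp add: pairing_def expval_zero_right)
  then show ?thesis using assms forms.span_minimal[of C "{\<eta>. pairing k \<omega> \<eta> = 0}"] by blast
qed

lemma eforms_single_component:
  assumes "J \<in> ksubsets k"
  shows "(\<lambda>J'. if J' = J then restr n d \<psi> J Y else 0) \<in> \<Omega> k"
  by (rule eformsI) (use assms restr_zero in \<open>auto intro: exI[of _ 0]\<close>)

lemma pairing_nondeg:
  assumes k: "k \<le> n" and \<omega>: "\<omega> \<in> \<Omega> k" and nz: "\<omega> \<noteq> 0"
  shows "\<exists>\<eta>\<in>\<Omega> (n - k). pairing k \<omega> \<eta> \<noteq> 0"
proof -
  obtain I where "\<omega> I \<noteq> 0" using nz by (metis ext zero_fun_apply)
  then have I: "I \<in> ksubsets k" using eforms_zero[OF \<omega>] by blast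
  then have I': "I \<subseteq> {1..n}" by (simp add: ksubsets_def)
  obtain X where X: "\<omega> I = restr n d \<psi> I X" using eforms_restr[OF \<omega> I] by blast
  obtain Y where Y: "expval I (restr n d \<psi> I X) (restr n d \<psi> ({1..n} - I) Y) \<noteq> 0"
    using expval_restr_nondeg[OF I'] X \<open>\<omega> I \<noteq> 0\<close> by auto
  define \<eta> where "\<eta> = (\<lambda>J. if J = {1..n} - I then restr n d \<psi> ({1..n} - I) Y else 0)"
  have "{1..n} - I \<in> ksubsets (n - k)"
    using I by (auto simp: ksubsets_def card_Diff_subset finite_subset)
  then have \<eta>_form: "\<eta> \<in> \<Omega> (n - k)" unfolding \<eta>_def by (rule eforms_single_component)
  have "J = I" if "J \<in> ksubsets k" "{1..n} - J = {1..n} - I" for J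
  proof -
    have "J \<subseteq> {1..n}" using that(1) by (simp add: ksubsets_def)
    then show "J = I" using that(2) I' by (metis double_diff order_refl)
  qed
  then have "pairing k \<omega> \<eta> = (\<Sum>J\<in>ksubsets k. if J = I then pairing_sign I * expval I (\<omega> I) (\<eta> ({1..n} - I)) else 0)"
    unfolding pairing_def by (intro sum.cong refl) (auto simp: \<eta>_def expval_zero_right)
  also have "\<dots> = pairing_sign I * expval I (restr n d \<psi> I X) (restr n d \<psi> ({1..n} - I) Y)"
    using I finite_ksubsets by (simp add: X \<eta>_def)
  finally have "pairing k \<omega> \<eta> \<noteq> 0" using Y by (simp add: pairing_sign_def)
  then show ?thesis using \<eta>_form by blast
qed


section \<open>Duality of dimensions and ranks\<close>

lemma dim_eforms_le:
  assumes k: "k \<le> n"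
  shows "forms.dim (\<Omega> k) \<le> forms.dim (\<Omega> (n - k))"
proof -
  obtain C where C: "finite C" "C \<subseteq> \<Omega> (n - k)" "forms.independent C" "\<Omega> (n - k) \<subseteq> forms.span C"
    "card C = forms.dim (\<Omega> (n - k))"
    by (rule forms.obtain_finite_basis[OF finite_imageI[OF finite_entry_positions] eforms_span])
  have "forms.dim (\<Omega> k) \<le> card C"
  proof (rule forms.dim_le_card_of_separating[where \<phi> = "\<lambda>\<eta> \<omega>. pairing k \<omega> \<eta>"])
    fix \<omega> assume \<omega>: "\<omega> \<in> \<Omega> k" and "\<forall>\<eta>\<in>C. pairing k \<omega> \<eta> = 0"
    then have "pairing k \<omega> \<eta> = 0" if "\<eta> \<in> \<Omega> (n - k)" for \<eta>
      using pairing_span_eq_0 C(4) that by blast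
    then show "\<omega> = 0" using pairing_nondeg[OF k \<omega>] by blast
  qed (use C subspace_eforms in \<open>simp_all add: pairing_add_left pairing_scale_left\<close>)
  then show ?thesis using C(5) by simp
qed

lemma cobound_eq_0_if_pairing_vanishes:
  assumes k: "k < n" and \<omega>: "\<omega> \<in> \<Omega> k"
    and C: "\<delta> (n - k - 1) ` \<Omega> (n - k - 1) \<subseteq> forms.span C" and vanish: "\<forall>y\<in>C. pairing k \<omega> y = 0"
  shows "\<delta> k \<omega> = 0"
proof (rule ccontr)
  assume "\<delta> k \<omega> \<noteq> 0"
  moreover have "Suc k \<le> n" using k by simp
  ultimately obtain \<eta> where \<eta>: "\<eta> \<in> \<Omega> (n - Suc k)" "pairing (Suc k) (\<delta> k \<omega>) \<eta> \<noteq> 0"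
    using pairing_nondeg cobound_in_eforms[OF k] by blast
  have "n - Suc k = n - k - 1" by simp
  then have "\<delta> (n - k - 1) \<eta> \<in> forms.span C" using C \<eta>(1) by (metis image_subset_iff)
  then have "pairing k \<omega> (\<delta> (n - k - 1) \<eta>) = 0" using pairing_span_eq_0 vanish by blast
  then have "cob_coeff (n - k - 1) * pairing (Suc k) (\<delta> k \<omega>) \<eta> = 0"
    using pairing_cobound[OF k, of \<omega> \<eta>] by simp
  then show False using \<eta>(2) cob_coeff_nonzero by simp
qed

lemma subspace_cobound_image: "forms.subspace (\<delta> k ` \<Omega> k)"
proof -
  interpret cob: Vector_Spaces.linear cscale cscale "\<delta> k" by (rule linear_cobound)
  show ?thesis by (rule cob.subspace_image[OF subspace_eforms])
qed

lemma cobound_image_span: "\<delta> k ` \<Omega> k \<subseteq> forms.span (\<delta> k ` matrix_unit ` entry_positions)"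
proof -
  interpret cob: Vector_Spaces.linear cscale cscale "\<delta> k" by (rule linear_cobound)
  show ?thesis by (rule cob.spans_image[OF eforms_span])
qed

lemma rank_cobound_le:
  assumes k: "k < n"
  shows "forms.dim (\<delta> k ` \<Omega> k) \<le> forms.dim (\<delta> (n - k - 1) ` \<Omega> (n - k - 1))"
proof -
  let ?k' = "n - k - 1"
  obtain C where C: "finite C" "C \<subseteq> \<delta> ?k' ` \<Omega> ?k'" "forms.independent C"
    "\<delta> ?k' ` \<Omega> ?k' \<subseteq> forms.span C" "card C = forms.dim (\<delta> ?k' ` \<Omega> ?k')"
    by (rule forms.obtain_finite_basis[OF finite_imageI[OF finite_imageI[OF finite_entry_positions]]
          cobound_image_span])
  have "\<forall>y\<in>C. \<exists>\<eta>\<in>\<Omega> ?k'. \<delta> ?k' \<eta> = y" using C(2) by blast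
  then obtain g where g: "\<And>y. y \<in> C \<Longrightarrow> g y \<in> \<Omega> ?k' \<and> \<delta> ?k' (g y) = y" by metis
  have "forms.dim (\<delta> k ` \<Omega> k) \<le> card C"
  proof (rule forms.dim_le_card_of_separating[where \<phi> = "\<lambda>y x. pairing (Suc k) x (g y)"])
    fix x assume "x \<in> \<delta> k ` \<Omega> k" and vanish: "\<forall>y\<in>C. pairing (Suc k) x (g y) = 0"
    then obtain \<omega> where \<omega>: "\<omega> \<in> \<Omega> k" "x = \<delta> k \<omega>" by blast
    have "pairing k \<omega> y = 0" if "y \<in> C" for y
      using pairing_cobound[OF k, of \<omega> "g y"] vanish g[OF that] that \<omega>(2) cob_coeff_nonzero by simp
    then show "x = 0"
      using cobound_eq_0_if_pairing_vanishes[OF k \<omega>(1) C(4)] \<omega>(2) by blast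
  qed (use C subspace_cobound_image in \<open>simp_all add: pairing_add_left pairing_scale_left\<close>)
  then show ?thesis using C(5) by simp
qed

lemma rank_cobound_top: "n \<le> k \<Longrightarrow> forms.dim (\<delta> k ` \<Omega> k) = 0"
  using forms.dim_le_card[of "\<delta> k ` \<Omega> k" "{}"] by (simp add: cobound_eq_0 image_subset_iff forms.span_empty)

lemma dim_eforms_dual: "k \<le> n \<Longrightarrow> forms.dim (\<Omega> k) = forms.dim (\<Omega> (n - k))"
  using dim_eforms_le[of k] dim_eforms_le[of "n - k"] by simp

lemma rank_cobound_dual:
  "k < n \<Longrightarrow> forms.dim (\<delta> k ` \<Omega> k) = forms.dim (\<delta> (n - k - 1) ` \<Omega> (n - k - 1))"
  using rank_cobound_le[of k] rank_cobound_le[of "n - k - 1"] by (simp add: Suc_diff_Suc)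

lemma cohom_dim_eq:
  "cohom_dim n d \<psi> k = forms.dim (\<Omega> k) - forms.dim (\<delta> k ` \<Omega> k)
     - (if k = 0 then 0 else forms.dim (\<delta> (k - 1) ` \<Omega> (k - 1)))"
  using forms.rank_nullity[OF linear_cobound[of k] subspace_eforms[of k]
      finite_imageI[OF finite_entry_positions] eforms_span[of k]]
  unfolding cohom_dim_def by simp

end

lemma cohomology_count_symmetric:
  fixes a r :: "nat \<Rightarrow> nat"
  assumes k: "k \<le> n" and a: "\<And>j. j \<le> n \<Longrightarrow> a j = a (n - j)"
    and r: "\<And>j. j < n \<Longrightarrow> r j = r (n - j - 1)" and top: "r n = 0"
  shows "a k - r k - (if k = 0 then 0 else r (k - 1))
       = a (n - k) - r (n - k) - (if n - k = 0 then 0 else r (n - k - 1))"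
proof -
  consider "k = 0" | "k = n" | "0 < k" "k < n" using k by linarith
  then show ?thesis
  proof cases
    case 1
    then show ?thesis using a[of 0] r[of 0] top by (cases "n = 0") simp_all
  next
    case 2
    then show ?thesis using a[of 0] r[of 0] top by (cases "n = 0") simp_all
  next
    case 3
    have left: "(if k = 0 then 0 else r (k - 1)) = r (n - k)" using r[of "k - 1"] 3 by (simp add: Suc_diff_Suc)
    have right: "(if n - k = 0 then 0 else r (n - k - 1)) = r k" using r[of k] 3 by simp
    show ?thesis unfolding left right using a[of k] k by linarith
  qed
qed

theorem corollary2:
  fixes n :: nat and d :: "nat \<Rightarrow> nat" and \<psi> :: "(nat \<Rightarrow> nat) \<Rightarrow> complex" and k :: nat
  assumes "(\<Sum>a\<in>idx d {1..n}. (cmod (\<psi> a))\<^sup>2) = 1"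
    and "k \<le> n"
  shows "cohom_dim n d \<psi> k = cohom_dim n d \<psi> (n - k)"
proof -
  interpret pure_state n d \<psi> by unfold_locales (fact assms(1))
  show ?thesis
    unfolding cohom_dim_eq
  proof (rule cohomology_count_symmetric[OF assms(2),
        where a = "\<lambda>j. forms.dim (\<Omega> j)" and r = "\<lambda>j. forms.dim (\<delta> j ` \<Omega> j)"])
    show "forms.dim (\<Omega> j) = forms.dim (\<Omega> (n - j))" if "j \<le> n" for j
      by (rule dim_eforms_dual[OF that])
    show "forms.dim (\<delta> j ` \<Omega> j) = forms.dim (\<delta> (n - j - 1) ` \<Omega> (n - j - 1))" if "j < n" for j
      by (rule rank_cobound_dual[OF that])
    show "forms.dim (\<delta> n ` \<Omega> n) = 0"
      by (rule rank_cobound_top) simp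
  qed
qed

end
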